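(* Let $n\ge2$, $\sigma>\tan^2\!\bigl(\tfrac{\pi}{2n}\bigr)$, let $Z_n$ be the Zolotarev polynomial for $\sigma$ and let $1<\alpha<\beta$ be such that $\{x\in\mathbb{C}: Z_n(x)\in[-L_n,L_n]\}=[-1,1]\cup[\alpha,\beta]$. Then: (i) if $n=2m+1$ ($m\ge1$), $$\beta^{m+1}\det\mathbf F+\beta^{m}\det\mathbf F_1+\dots+\beta\det\mathbf F_m+\det\mathbf F_{m+1}=0,$$ where $F_k,\mathbf F,\mathbf F_i$ are built from $s_k=\tfrac12(-\alpha^k-1-(-1)^k-\beta^k)$ with $\nu=m-1,\mu=m+1$; and $$-2\det\mathbf F_1+(\alpha-n\sigma)\det\mathbf F=0,$$ where $F_k,\mathbf F,\mathbf F_i$ are built from $s_k=\tfrac12(\alpha^k+1+(-1)^k+\beta^k)$ with $\nu=m+1,\mu=m-1$; (ii) if $n=2m+2$ ($m\ge0$), $$\alpha^{m+1}\det\mathbf F+\alpha^{m}\det\mathbf F_1+\dots+\alpha\det\mathbf F_m+\det\mathbf F_{m+1}=0,$$ where $F_k,\mathbf F,\mathbf F_i$ are built from $s_k=\tfrac12(-\alpha^k+1-(-1)^k-\beta^k)$ with $\nu=m,\mu=m+1$; and $$-2\det\mathbf F_1+(\alpha+1-n\sigma)\det\mathbf F=0,$$ where $F_k,\mathbf F,\mathbf F_i$ are built from $s_k=\tfrac12(\alpha^k+1+(-1)^k-\beta^k)$ with $\nu=m+1,\mu=m$.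
   Context: For $\sigma>0$, the Zolotarev polynomial $Z_n$ is the polynomial of the form $x^n-n\sigma x^{n-1}+a_{n-2}x^{n-2}+\dots+a_0$ ($a_j\in\mathbb{C}$) minimizing $\max_{x\in[-1,1]}|\cdot|$ among all such polynomials, and $L_n:=\max_{x\in[-1,1]}|Z_n(x)|$. It is known that for $\sigma>\tan^2(\pi/(2n))$ the set $Z_n^{-1}([-L_n,L_n])$ is $[-1,1]\cup[\alpha,\beta]$ with $1<\alpha<\beta$. Given complex numbers $s_1,s_2,\dots$: $F_0:=1$, $F_k:=0$ for $k<0$, and for $k\ge1$, $F_k:=\frac{(-1)^k}{k!}\det M_k$ where $M_k$ is the $k\times k$ matrix with entry $s_{i-j+1}$ for $j\le i$, entry $i$ at position $(i,i+1)$, and $0$ elsewhere. For integers $\nu\ge0,\mu\ge0$, $\mathbf F$ is the $\mu\times\mu$ matrix with $(i,j)$ entry $F_{\nu+i-j}$, and $\mathbf F_i$ ($1\le i\le\mu$) is $\mathbf F$ with its $i$-th column replaced by $(-F_{\nu+1},\dots,-F_{\nu+\mu})^T$. Convention: if $\mu=0$, $\det\mathbf F:=1$ and $\det\mathbf F_1:=0$. *)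

theory Defs
  imports Complex_Main "HOL-Computational_Algebra.Polynomial" "Jordan_Normal_Form.Determinant"
begin

definition zol_class :: "nat \<Rightarrow> real \<Rightarrow> complex poly set" where
  "zol_class n \<sigma> = {p. degree p = n \<and> coeff p n = 1 \<and>
      coeff p (n - 1) = - complex_of_real (real n * \<sigma>)}"

definition sup_norm_I :: "complex poly \<Rightarrow> real" where
  "sup_norm_I p = Sup ((\<lambda>x::real. cmod (poly p (complex_of_real x))) ` {-1..1})"

definition is_zolotarev :: "nat \<Rightarrow> real \<Rightarrow> complex poly \<Rightarrow> bool" where
  "is_zolotarev n \<sigma> Z \<longleftrightarrow> Z \<in> zol_class n \<sigma> \<and>
      (\<forall>P \<in> zol_class n \<sigma>. sup_norm_I Z \<le> sup_norm_I P)"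

text \<open>The k x k matrix M_k (0-indexed version of the 1-indexed definition).\<close>
definition Mmat :: "(nat \<Rightarrow> complex) \<Rightarrow> nat \<Rightarrow> complex mat" where
  "Mmat s k = mat k k (\<lambda>(i, j). if j \<le> i then s (i - j + 1)
                              else if j = i + 1 then of_nat (i + 1) else 0)"

definition Fk :: "(nat \<Rightarrow> complex) \<Rightarrow> int \<Rightarrow> complex" where
  "Fk s k = (if k < 0 then 0 else if k = 0 then 1
             else (-1) ^ nat k / of_nat (fact (nat k)) * det (Mmat s (nat k)))"

definition Fmat :: "(nat \<Rightarrow> complex) \<Rightarrow> nat \<Rightarrow> nat \<Rightarrow> complex mat" where
  "Fmat s \<nu> \<mu> = mat \<mu> \<mu> (\<lambda>(i, j). Fk s (int \<nu> + int i - int j))"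

text \<open>Fmat with its i-th column (1-indexed) replaced by (-F_{nu+1},...,-F_{nu+mu}).\<close>
definition Fmat_i :: "(nat \<Rightarrow> complex) \<Rightarrow> nat \<Rightarrow> nat \<Rightarrow> nat \<Rightarrow> complex mat" where
  "Fmat_i s \<nu> \<mu> c = mat \<mu> \<mu> (\<lambda>(i, j). if j + 1 = c then - Fk s (int \<nu> + int i + 1)
                                      else Fk s (int \<nu> + int i - int j))"

text \<open>det of F (for mu = 0 this is the empty determinant 1).\<close>
definition detF :: "(nat \<Rightarrow> complex) \<Rightarrow> nat \<Rightarrow> nat \<Rightarrow> complex" where
  "detF s \<nu> \<mu> = det (Fmat s \<nu> \<mu>)"

text \<open>det of F_i for 1 \<le> i \<le> mu; by convention det F_1 = 0 when mu = 0.\<close>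
definition detFi :: "(nat \<Rightarrow> complex) \<Rightarrow> nat \<Rightarrow> nat \<Rightarrow> nat \<Rightarrow> complex" where
  "detFi s \<nu> \<mu> c = (if \<mu> = 0 then 0 else det (Fmat_i s \<nu> \<mu> c))"

end

theory Submission
  imports Defs "HOL-Computational_Algebra.Polynomial_FPS"
    "HOL-Computational_Algebra.Fundamental_Theorem_Algebra" "Jordan_Normal_Form.Char_Poly"
begin

text \<open>
  Expanding the determinant \<open>M\<^sub>k\<close> gives Newton's identities \<open>k F\<^sub>k = - \<Sum>\<^sub>j s\<^sub>k\<^sub>-\<^sub>j F\<^sub>j\<close>, so
  \<open>F(x) = \<Sum> F\<^sub>k x\<^sup>k\<close> satisfies \<open>F'/F = - \<Sum> s\<^sub>k\<^sub>+\<^sub>1 x\<^sup>k\<close>; when \<open>2 s\<^sub>k\<close> is a difference of power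
  sums of numbers \<open>a\<^sub>i\<close> and \<open>b\<^sub>j\<close>, this makes \<open>F\<close> the square root of
  \<open>\<Prod>(1 - a\<^sub>i x) / \<Prod>(1 - b\<^sub>j x)\<close>.

  The extremal property forces the equioscillation structure of \<open>Z = Z\<^sub>n\<close>: it is real, all roots
  of \<open>Z \<mp> L\<close> are real, and counting the critical points shows that \<open>Z - L = (x - \<beta>) P\<^sup>2\<close> and
  \<open>Z + L = (x - \<alpha>)(x\<^sup>2 - 1) Q\<^sup>2\<close>, up to one factor \<open>x + 1\<close> that moves between the two
  according to the parity of \<open>n\<close>. Eliminating \<open>Z\<close> gives Pell-type identities
  \<open>A U\<^sup>2 = B V\<^sup>2 + (linear)\<close> whose reversals make \<open>rev V / rev U\<close> a Pad\'e approximant of \<open>F\<close>.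
  The Pad\'e conditions are a linear system with matrix \<open>F\<close>, so by Cramer's rule the coefficients
  of \<open>rev U\<close> are \<open>det F\<^sub>i / det F\<close>. The first identity of each pair says that \<open>\<beta>\<close> or \<open>\<alpha>\<close> is a
  root of \<open>U\<close>; the second compares the coefficient \<open>-n\<sigma>\<close> of \<open>Z\<close> with the one computed from
  the factorisation.
\<close>

section \<open>Newton's identities and Cramer's rule for the \<open>F\<^sub>k\<close>\<close>

lemma Mmat_mult_vec_Fk:
  fixes s :: "nat \<Rightarrow> complex"
  assumes newton: "\<And>j. 0 < j \<Longrightarrow> j < k \<Longrightarrow>
      of_nat j * Fk s (int j) = - (\<Sum>i<j. s (j - i) * Fk s (int i))"
  shows "Mmat s k *\<^sub>v vec k (\<lambda>j. Fk s (int j)) =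
    vec k (\<lambda>i. if Suc i = k then (\<Sum>j<k. s (k - j) * Fk s (int j)) else 0)"
proof (rule eq_vecI)
  fix i assume "i < dim_vec (vec k (\<lambda>i. if Suc i = k then (\<Sum>j<k. s (k - j) * Fk s (int j)) else 0))"
  hence i: "i < k" by simp
  let ?row = "\<lambda>j. Mmat s k $$ (i, j) * Fk s (int j)"
  have "(Mmat s k *\<^sub>v vec k (\<lambda>j. Fk s (int j))) $ i = (\<Sum>j<k. ?row j)"
    using i by (auto simp: mult_mat_vec_def scalar_prod_def Mmat_def lessThan_atLeast0
        intro!: sum.cong)
  also have "\<dots> = (\<Sum>j<Suc i. s (Suc i - j) * Fk s (int j))
      + (if Suc i < k then of_nat (Suc i) * Fk s (int (Suc i)) else 0)"
  proof -
    have "(\<Sum>j<k. ?row j) = (\<Sum>j\<in>{..<Suc i} \<union> (if Suc i < k then {Suc i} else {}). ?row j)"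
      by (rule sum.mono_neutral_right) (use i in \<open>auto simp: Mmat_def\<close>)
    also have "\<dots> = (\<Sum>j<Suc i. ?row j) + (if Suc i < k then ?row (Suc i) else 0)"
      by (auto simp: sum.union_disjoint)
    finally show ?thesis
      using i by (auto simp: Mmat_def Suc_diff_le intro!: sum.cong)
  qed
  also have "\<dots> = (if Suc i = k then (\<Sum>j<k. s (k - j) * Fk s (int j)) else 0)"
    using i newton[of "Suc i"] by auto
  finally show "(Mmat s k *\<^sub>v vec k (\<lambda>j. Fk s (int j))) $ i =
      vec k (\<lambda>i. if Suc i = k then (\<Sum>j<k. s (k - j) * Fk s (int j)) else 0) $ i"
    using i by simp
qed (simp add: Mmat_def)

lemma det_Mmat_replace_first_col:
  fixes s :: "nat \<Rightarrow> complex"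
  shows "det (replace_col (Mmat s (Suc l)) (vec (Suc l) (\<lambda>i. if i = l then c else 0)) 0)
    = c * (-1) ^ l * fact l"
proof -
  define A where "A = replace_col (Mmat s (Suc l)) (vec (Suc l) (\<lambda>i. if i = l then c else 0)) 0"
  have A: "A \<in> carrier_mat (Suc l) (Suc l)" by (simp add: A_def Mmat_def replace_col_def)
  have "det A = (\<Sum>i<Suc l. A $$ (i, 0) * cofactor A i 0)"
    by (rule laplace_expansion_column[OF A]) simp
  also have "\<dots> = c * cofactor A l 0"
    by (subst sum.remove[of _ l]) (auto simp: A_def Mmat_def replace_col_def intro!: sum.neutral)
  also have "cofactor A l 0 = (-1) ^ l * det (mat_delete A l 0)"
    by (simp add: cofactor_def)
  also have "det (mat_delete A l 0) = fact l"
  proof -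
    have D: "mat_delete A l 0 \<in> carrier_mat l l" using A by (simp add: mat_delete_def)
    have "det (mat_delete A l 0) = prod_list (diag_mat (mat_delete A l 0))"
      by (rule det_lower_triangular[OF _ D])
        (use A in \<open>auto simp: mat_delete_def A_def replace_col_def Mmat_def\<close>)
    also have "diag_mat (mat_delete A l 0) = map (\<lambda>i. of_nat (Suc i)) [0..<l]"
      using D by (auto simp: diag_mat_def mat_delete_def A_def replace_col_def Mmat_def
          intro!: map_cong)
    also have "prod_list (map (\<lambda>i. of_nat (Suc i) :: complex) [0..<l]) = fact l"
      by (induction l) (simp_all add: algebra_simps)
    finally show ?thesis .
  qed
  finally show ?thesis by (simp add: A_def mult.assoc)
qed

lemma Fk_Newton:
  fixes s :: "nat \<Rightarrow> complex"
  shows "of_nat k * Fk s (int k) = - (\<Sum>j<k. s (k - j) * Fk s (int j))"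
proof (induction k rule: less_induct)
  case (less k)
  show ?case
  proof (cases k)
    case (Suc l)
    hence "0 < k" by simp
    hence k0: "(of_nat k :: complex) \<noteq> 0" by simp
    define c where "c = (\<Sum>j<k. s (k - j) * Fk s (int j))"
    define v where "v = vec k (\<lambda>j. Fk s (int j))"
    have M: "Mmat s k \<in> carrier_mat k k" by (simp add: Mmat_def)
    have Mv: "Mmat s k *\<^sub>v v = vec (Suc l) (\<lambda>i. if i = l then c else 0)"
      unfolding v_def c_def using Mmat_mult_vec_Fk[of k s] less Suc by simp
    \<comment> \<open>Cramer's rule for the first column, whose unknown is \<open>F\<^sub>0 = 1\<close>\<close>
    have "det (replace_col (Mmat s k) (Mmat s k *\<^sub>v v) 0) = v $ 0 * det (Mmat s k)"
      by (rule cramer_lemma_mat[OF M]) (simp_all add: v_def Suc)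
    hence det: "det (Mmat s k) = c * (-1) ^ l * fact l"
      unfolding Mv using det_Mmat_replace_first_col[of s l c] Suc by (simp add: v_def Fk_def)
    have "Fk s (int k) = (-1) ^ k / fact k * det (Mmat s k)"
      using \<open>0 < k\<close> by (simp add: Fk_def)
    also have "\<dots> = - c / of_nat k"
    proof -
      have "(fact k :: complex) = of_nat k * fact l" "(-1 :: complex) ^ k * (-1) ^ l = -1"
        using Suc by (simp_all flip: power_add)
      with k0 show ?thesis unfolding det by (simp add: field_simps)
    qed
    finally show ?thesis using k0 by (simp add: c_def)
  qed simp
qed

lemma det_Fmat_i_Cramer:
  fixes w :: "nat \<Rightarrow> complex"
  assumes w0: "w 0 = 1"
    and eqs: "\<And>i. i < \<mu> \<Longrightarrow> (\<Sum>j\<le>\<mu>. w j * Fk s (int \<nu> + 1 + int i - int j)) = 0"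
    and c: "1 \<le> c" "c \<le> \<mu>"
  shows "det (Fmat_i s \<nu> \<mu> c) = w c * det (Fmat s \<nu> \<mu>)"
proof -
  define x where "x = vec \<mu> (\<lambda>j. w (Suc j))"
  have A: "Fmat s \<nu> \<mu> \<in> carrier_mat \<mu> \<mu>" by (simp add: Fmat_def)
  have x: "x \<in> carrier_vec \<mu>" by (simp add: x_def)
  have Ax: "Fmat s \<nu> \<mu> *\<^sub>v x = vec \<mu> (\<lambda>i. - Fk s (int \<nu> + int i + 1))"
  proof (rule eq_vecI)
    fix i assume "i < dim_vec (vec \<mu> (\<lambda>i. - Fk s (int \<nu> + int i + 1)))"
    hence i: "i < \<mu>" by simp
    have "(Fmat s \<nu> \<mu> *\<^sub>v x) $ i = (\<Sum>j<\<mu>. w (Suc j) * Fk s (int \<nu> + 1 + int i - int (Suc j)))"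
      using i by (auto simp: mult_mat_vec_def scalar_prod_def x_def Fmat_def lessThan_atLeast0
          algebra_simps intro!: sum.cong)
    also have "\<dots> = - Fk s (int \<nu> + int i + 1)"
    proof -
      obtain l where l: "\<mu> = Suc l" using i by (cases \<mu>) auto
      have "(\<Sum>j\<le>\<mu>. w j * Fk s (int \<nu> + 1 + int i - int j)) = Fk s (int \<nu> + int i + 1)
          + (\<Sum>j<\<mu>. w (Suc j) * Fk s (int \<nu> + 1 + int i - int (Suc j)))"
        unfolding l sum.atMost_Suc_shift lessThan_Suc_atMost using w0 by (simp add: algebra_simps)
      thus ?thesis using eqs[OF i] by (simp add: eq_neg_iff_add_eq_0 add.commute)
    qed
    finally show "(Fmat s \<nu> \<mu> *\<^sub>v x) $ i = vec \<mu> (\<lambda>i. - Fk s (int \<nu> + int i + 1)) $ i"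
      using i by simp
  qed (use A in auto)
  have "det (replace_col (Fmat s \<nu> \<mu>) (Fmat s \<nu> \<mu> *\<^sub>v x) (c - 1)) = x $ (c - 1) * det (Fmat s \<nu> \<mu>)"
    by (rule cramer_lemma_mat[OF A x]) (use c in auto)
  moreover have "replace_col (Fmat s \<nu> \<mu>) (Fmat s \<nu> \<mu> *\<^sub>v x) (c - 1) = Fmat_i s \<nu> \<mu> c"
    unfolding Ax using c by (intro eq_matI) (auto simp: replace_col_def Fmat_def Fmat_i_def)
  ultimately show ?thesis using c by (simp add: x_def)
qed

section \<open>Products of linear factors\<close>

definition poly_of_roots :: "'a::comm_ring_1 list \<Rightarrow> 'a poly" where
  "poly_of_roots rs = (\<Prod>r\<leftarrow>rs. [:-r, 1:])"

lemma poly_of_roots_Nil [simp]: "poly_of_roots [] = 1"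
  and poly_of_roots_Cons [simp]: "poly_of_roots (r # rs) = [:-r, 1:] * poly_of_roots rs"
  by (simp_all add: poly_of_roots_def)

lemma poly_of_roots_replicate [simp]: "poly_of_roots (replicate e r) = [:-r, 1:] ^ e"
  by (induction e) simp_all

lemma poly_poly_of_roots: "poly (poly_of_roots rs) x = (\<Prod>r\<leftarrow>rs. x - r)"
  by (induction rs) (simp_all add: algebra_simps)

lemma poly_of_roots_eq_0_iff [simp]:
  "poly (poly_of_roots rs) x = 0 \<longleftrightarrow> x \<in> set (rs :: 'a::idom list)"
  by (induction rs) auto

lemma lead_coeff_poly_of_roots [simp]: "lead_coeff (poly_of_roots (rs :: 'a::idom list)) = 1"
  by (induction rs) (simp_all add: lead_coeff_mult del: mult_pCons_left)

lemma poly_of_roots_nonzero [simp]: "poly_of_roots (rs :: 'a::idom list) \<noteq> 0"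
  using lead_coeff_poly_of_roots[of rs] by (metis leading_coeff_0_iff one_neq_zero)

lemma degree_poly_of_roots [simp]: "degree (poly_of_roots (rs :: 'a::idom list)) = length rs"
  by (induction rs) (simp_all add: degree_mult_eq del: mult_pCons_left)

lemma order_poly_of_roots: "order x (poly_of_roots (rs :: 'a::idom list)) = count_list rs x"
proof (induction rs)
  case (Cons r rs)
  have "order x [:-r, 1:] = (if x = r then 1 else 0)"
    using order_power_n_n[of x 1] by (auto intro: order_0I)
  then show ?case
    using Cons by (simp add: order_mult del: mult_pCons_left)
qed (simp add: order_0I)

lemma poly_of_roots_eq_prod_count:
  assumes "finite A" "set rs \<subseteq> A"
  shows "poly_of_roots rs = (\<Prod>x\<in>A. [:-x, 1:] ^ count_list rs x)"
  using assms(2)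
proof (induction rs)
  case (Cons r rs)
  have "(\<Prod>x\<in>A. [:-x, 1:] ^ count_list (r # rs) x)
      = (\<Prod>x\<in>A. [:-x, 1:] ^ count_list rs x) * (\<Prod>x\<in>A. if x = r then [:-x, 1:] else 1)"
    by (auto simp: prod.distrib[symmetric] intro!: prod.cong)
  also have "(\<Prod>x\<in>A. if x = r then [:-x, 1:] else 1) = [:-r, 1:]"
    using Cons.prems assms(1) by (simp add: prod.delta)
  finally show ?case using Cons by (simp add: mult.commute)
qed simp

lemma lead_coeff_poly_of_roots_mult [simp]:
  "lead_coeff (poly_of_roots rs * q) = lead_coeff (q :: 'a::idom poly)"
  by (simp only: lead_coeff_mult lead_coeff_poly_of_roots mult_1)

lemma degree_poly_of_roots_mult:
  "q \<noteq> 0 \<Longrightarrow> degree (poly_of_roots rs * q) = length rs + degree (q :: 'a::idom poly)"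
  by (simp add: degree_mult_eq)

lemma degree_diff_le_if_same_lead:
  fixes p q :: "'a::ab_group_add poly"
  assumes "degree p = Suc d" "degree q = Suc d" "lead_coeff p = lead_coeff q"
  shows "degree (p - q) \<le> d"
proof (rule degree_le, intro allI impI)
  fix i assume "d < i"
  then show "coeff (p - q) i = 0"
    using assms by (cases "i = Suc d") (auto simp: coeff_eq_0)
qed

lemma degree_poly_of_roots_mult_square:
  fixes P :: "'a::idom poly"
  assumes "lead_coeff P = 1"
  shows "degree (poly_of_roots rs * P ^ 2) = length rs + 2 * degree P"
proof -
  have "P \<noteq> 0" using assms by auto
  then show ?thesis by (subst degree_mult_eq) (auto simp: degree_power_eq)
qed

lemma poly_of_roots_pos:
  fixes x :: real
  shows "\<forall>r\<in>set rs. r < x \<Longrightarrow> 0 < poly (poly_of_roots rs) x"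
  by (induction rs) auto

lemma poly_of_roots_strict_mono:
  fixes x y :: real
  assumes "\<forall>r\<in>set rs. r < x" "x < y" "rs \<noteq> []"
  shows "poly (poly_of_roots rs) x < poly (poly_of_roots rs) y"
  using assms
proof (induction rs)
  case (Cons r rs)
  have "0 < poly (poly_of_roots rs) x" using Cons.prems poly_of_roots_pos by simp
  moreover have "poly (poly_of_roots rs) x \<le> poly (poly_of_roots rs) y"
    using Cons by (cases "rs = []") (auto intro: less_imp_le)
  ultimately have "(x - r) * poly (poly_of_roots rs) x < (y - r) * poly (poly_of_roots rs) y"
    using Cons.prems by (intro mult_less_le_imp_less) auto
  then show ?case by (simp add: algebra_simps)
qed simp

section \<open>The generating function of the \<open>F\<^sub>k\<close>\<close>

no_notation vec_index (infixl \<open>$\<close> 100)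
notation fps_nth (infixl \<open>$\<close> 75)

definition fps_F :: "(nat \<Rightarrow> complex) \<Rightarrow> complex fps" where
  "fps_F s = Abs_fps (\<lambda>k. Fk s (int k))"

lemma fps_F_nth_0 [simp]: "fps_F s $ 0 = 1"
  by (simp add: fps_F_def Fk_def)

lemma fps_deriv_fps_F: "fps_deriv (fps_F s) = - (Abs_fps (\<lambda>k. s (Suc k)) * fps_F s)"
proof (rule fps_ext)
  fix k
  have "fps_deriv (fps_F s) $ k = - (\<Sum>j<Suc k. s (Suc k - j) * Fk s (int j))"
    using Fk_Newton[of "Suc k" s] by (simp add: fps_F_def)
  also have "(\<Sum>j<Suc k. s (Suc k - j) * Fk s (int j)) = (\<Sum>i=0..k. s (Suc i) * Fk s (int (k - i)))"
    unfolding lessThan_Suc_atMost atLeast0AtMost[symmetric]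
    by (subst sum.atLeastAtMost_rev[of _ 0 k, simplified]) (auto simp: Suc_diff_le intro!: sum.cong)
  finally show "fps_deriv (fps_F s) $ k = (- (Abs_fps (\<lambda>k. s (Suc k)) * fps_F s)) $ k"
    by (simp add: fps_mult_nth fps_F_def)
qed

definition fps_root_prod :: "'a::comm_ring_1 list \<Rightarrow> 'a fps" where
  "fps_root_prod as = (\<Prod>a\<leftarrow>as. 1 - fps_const a * fps_X)"

lemma fps_root_prod_Nil [simp]: "fps_root_prod [] = 1"
  and fps_root_prod_Cons [simp]:
    "fps_root_prod (a # as) = (1 - fps_const a * fps_X) * fps_root_prod as"
  by (simp_all add: fps_root_prod_def)

lemma fps_root_prod_nth_0 [simp]: "fps_root_prod as $ 0 = 1"
  by (induction as) simp_all

lemma fps_root_prod_nth_1: "fps_root_prod as $ 1 = - sum_list as"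
  by (induction as) (simp_all add: fps_mult_nth_1 algebra_simps)

lemma fps_deriv_fps_root_prod:
  "fps_deriv (fps_root_prod as) = - (Abs_fps (\<lambda>k. \<Sum>a\<leftarrow>as. a ^ Suc k) * fps_root_prod as)"
proof (induction as)
  case (Cons a as)
  have geometric: "Abs_fps (\<lambda>k. a ^ Suc k) * (1 - fps_const a * fps_X) = fps_const a"
  proof (rule fps_ext)
    fix n
    have "Abs_fps (\<lambda>k. a ^ Suc k) * (1 - fps_const a * fps_X)
        = Abs_fps (\<lambda>k. a ^ Suc k) - fps_const a * (Abs_fps (\<lambda>k. a ^ Suc k) * fps_X)"
      by (simp add: right_diff_distrib mult.left_commute)
    then show "(Abs_fps (\<lambda>k. a ^ Suc k) * (1 - fps_const a * fps_X)) $ n = fps_const a $ n"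
      by (cases n) simp_all
  qed
  define G where "G = Abs_fps (\<lambda>k. a ^ Suc k)"
  define S where "S = Abs_fps (\<lambda>k. \<Sum>x\<leftarrow>as. x ^ Suc k)"
  have "fps_deriv (fps_root_prod (a # as)) = fps_deriv (1 - fps_const a * fps_X) * fps_root_prod as
      + (1 - fps_const a * fps_X) * fps_deriv (fps_root_prod as)"
    by (simp only: fps_root_prod_Cons fps_deriv_mult add.commute)
  also have "\<dots> = - (fps_const a * fps_root_prod as)
      - (1 - fps_const a * fps_X) * (S * fps_root_prod as)"
    unfolding Cons S_def[symmetric] by (simp add: algebra_simps del: fps_const_neg)
  also have "\<dots> = - ((G * (1 - fps_const a * fps_X)) * fps_root_prod as)
      - (1 - fps_const a * fps_X) * (S * fps_root_prod as)"
    unfolding G_def geometric ..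
  also have "\<dots> = - ((G + S) * fps_root_prod (a # as))"
    by (simp add: algebra_simps)
  also have "G + S = Abs_fps (\<lambda>k. \<Sum>x\<leftarrow>a # as. x ^ Suc k)"
    by (simp add: G_def S_def fps_plus_def)
  finally show ?case .
qed (simp add: fps_eq_iff)

lemma fps_eq_if_log_deriv_eq:
  fixes P U :: "'a::field_char_0 fps"
  assumes "P $ 0 = 1" "U $ 0 = 1" "P * fps_deriv U = fps_deriv P * U"
  shows "U = P"
proof -
  define V where "V = U - P"
  have V0: "V $ 0 = 0" using assms by (simp add: V_def)
  have E: "P * fps_deriv V = fps_deriv P * V" using assms(3) by (simp add: V_def algebra_simps)
  have "\<forall>j\<le>k. V $ j = 0" for k
  proof (induction k)
    case (Suc k)
    have "P $ 0 * fps_deriv V $ k = (\<Sum>i\<in>{0}. P $ i * fps_deriv V $ (k - i))" by simp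
    also have "\<dots> = (P * fps_deriv V) $ k"
      unfolding fps_mult_nth by (rule sum.mono_neutral_left) (use Suc in auto)
    also have "\<dots> = (fps_deriv P * V) $ k" using E by simp
    also have "\<dots> = 0" unfolding fps_mult_nth using Suc by (auto intro!: sum.neutral)
    finally have "of_nat (Suc k) * V $ Suc k = 0" using assms(1) by simp
    hence "V $ Suc k = 0" by (simp del: of_nat_Suc)
    then show ?case using Suc le_Suc_eq by auto
  qed (simp add: V0)
  hence "V = 0" by (intro fps_ext) auto
  thus ?thesis by (simp add: V_def)
qed

text \<open>Both sides have constant term 1 and the same logarithmic derivative.\<close>

lemma fps_F_square:
  assumes s: "\<And>k. s k = ((\<Sum>a\<leftarrow>as. a ^ k) - (\<Sum>b\<leftarrow>bs. b ^ k)) / 2"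
  shows "fps_F s ^ 2 * fps_root_prod bs = fps_root_prod as"
proof -
  define S where "S as = Abs_fps (\<lambda>k. \<Sum>a\<leftarrow>as. a ^ Suc k)" for as :: "complex list"
  define T where "T = Abs_fps (\<lambda>k. s (Suc k))"
  have T: "2 * T + S bs = S as"
    by (rule fps_ext) (simp add: S_def T_def s numeral_fps_const field_simps)
  have "fps_deriv (fps_F s ^ 2 * fps_root_prod bs)
      = - ((2 * T + S bs) * (fps_F s ^ 2 * fps_root_prod bs))"
    unfolding power2_eq_square fps_deriv_mult fps_deriv_fps_F fps_deriv_fps_root_prod
    by (simp only: T_def S_def) (simp add: algebra_simps)
  also have "\<dots> = - (S as * (fps_F s ^ 2 * fps_root_prod bs))"
    unfolding T ..
  finally have dU: "fps_deriv (fps_F s ^ 2 * fps_root_prod bs)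
      = - (S as * (fps_F s ^ 2 * fps_root_prod bs))" .
  have "fps_root_prod as * fps_deriv (fps_F s ^ 2 * fps_root_prod bs)
      = fps_deriv (fps_root_prod as) * (fps_F s ^ 2 * fps_root_prod bs)"
    unfolding dU fps_deriv_fps_root_prod S_def[symmetric] by (simp add: mult_ac)
  moreover have "(fps_F s ^ 2 * fps_root_prod bs) $ 0 = 1"
    by (simp add: power2_eq_square)
  ultimately show ?thesis
    by (intro fps_eq_if_log_deriv_eq[OF fps_root_prod_nth_0])
qed

section \<open>Reversed polynomials and Pad\'e approximants of \<open>fps_F\<close>\<close>

text \<open>\<open>rev_fps N p\<close> is \<open>x\<^sup>N p(1/x)\<close> as a power series; \<open>N\<close> is a formal degree,
  meant to satisfy \<open>degree p \<le> N\<close>.\<close>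

definition rev_fps :: "nat \<Rightarrow> 'a::zero poly \<Rightarrow> 'a fps" where
  "rev_fps N p = Abs_fps (\<lambda>k. if k \<le> N then coeff p (N - k) else 0)"

lemma rev_fps_nth: "rev_fps N p $ k = (if k \<le> N then coeff p (N - k) else 0)"
  by (simp add: rev_fps_def)

lemma rev_fps_0 [simp]: "rev_fps N 0 = 0"
  by (rule fps_ext) (simp add: rev_fps_nth)

lemma rev_fps_add: "rev_fps N (p + q) = rev_fps N p + rev_fps N q"
  by (rule fps_ext) (simp add: rev_fps_nth)

lemma rev_fps_eq_reflect_poly:
  assumes "degree p \<le> N"
  shows "rev_fps N p = fps_of_poly (reflect_poly p) * fps_X ^ (N - degree p)"
  using assms by (intro fps_ext)
    (auto simp: rev_fps_nth fps_X_power_mult_right_nth coeff_reflect_poly coeff_eq_0)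

lemma rev_fps_mult:
  fixes p q :: "'a::idom poly"
  assumes "degree p \<le> N" "degree q \<le> M"
  shows "rev_fps (N + M) (p * q) = rev_fps N p * rev_fps M q"
proof (cases "p = 0 \<or> q = 0")
  case True
  then show ?thesis by auto
next
  case False
  hence d: "degree (p * q) = degree p + degree q" by (simp add: degree_mult_eq)
  have e: "N + M - degree (p * q) = (N - degree p) + (M - degree q)" using d assms by simp
  have "rev_fps (N + M) (p * q)
      = fps_of_poly (reflect_poly (p * q)) * fps_X ^ (N + M - degree (p * q))"
    by (rule rev_fps_eq_reflect_poly) (use d assms in simp)
  also have "\<dots> = (fps_of_poly (reflect_poly p) * fps_X ^ (N - degree p))
      * (fps_of_poly (reflect_poly q) * fps_X ^ (M - degree q))"
    unfolding e power_add reflect_poly_mult fps_of_poly_mult by (simp only: ac_simps)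
  also have "\<dots> = rev_fps N p * rev_fps M q"
    using assms by (simp only: rev_fps_eq_reflect_poly)
  finally show ?thesis .
qed

lemma rev_fps_shift:
  assumes "degree p \<le> d" "d \<le> N"
  shows "rev_fps N p = fps_X ^ (N - d) * rev_fps d p"
  using assms by (intro fps_ext) (auto simp: rev_fps_nth fps_X_power_mult_nth coeff_eq_0)

lemma rev_fps_poly_of_roots:
  "rev_fps (length rs) (poly_of_roots (rs :: 'a::idom list)) = fps_root_prod rs"
proof (induction rs)
  case (Cons r rs)
  have "rev_fps (1 + length rs) ([:-r, 1:] * poly_of_roots rs)
      = rev_fps 1 [:-r, 1:] * rev_fps (length rs) (poly_of_roots rs)"
    by (rule rev_fps_mult) simp_all
  moreover have "rev_fps 1 [:-r, 1:] = 1 - fps_const r * fps_X"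
    by (rule fps_ext) (auto simp: rev_fps_nth numeral_2_eq_2 le_Suc_eq)
  ultimately show ?case using Cons by simp
qed (rule fps_ext, simp add: rev_fps_nth)

lemma rev_fps_poly_of_roots_mult_square:
  fixes U :: "'a::idom poly"
  assumes "degree U \<le> \<mu>"
  shows "rev_fps (length rs + 2 * \<mu>) (poly_of_roots rs * U ^ 2)
    = fps_root_prod rs * rev_fps \<mu> U ^ 2"
proof -
  have "rev_fps (2 * \<mu>) (U ^ 2) = rev_fps \<mu> U ^ 2"
    using rev_fps_mult[OF assms assms] by (simp add: power2_eq_square mult_2)
  moreover have "degree (U ^ 2) \<le> 2 * \<mu>"
    using assms degree_power_le[of U 2] by linarith
  ultimately show ?thesis
    by (simp add: rev_fps_mult rev_fps_poly_of_roots flip: rev_fps_poly_of_roots)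
qed

lemma fps_nth_eq_0_if_mult_nth_eq_0:
  fixes E G :: "'a::idom fps"
  assumes "E $ 0 \<noteq> 0" "\<And>k. k < N \<Longrightarrow> (E * G) $ k = 0" "k < N"
  shows "G $ k = 0"
  using assms(3)
proof (induction k rule: less_induct)
  case (less k)
  have "E $ 0 * G $ k = (\<Sum>i\<in>{0}. E $ i * G $ (k - i))" by simp
  also have "\<dots> = (E * G) $ k"
    unfolding fps_mult_nth by (rule sum.mono_neutral_left) (use less in auto)
  finally have "E $ 0 * G $ k = (E * G) $ k" .
  thus ?case using assms(1,2) less.prems by simp
qed

text \<open>A power series identity \<open>R A\<^sup>2 = P B\<^sup>2 + O(x\<^sup>N)\<close> with \<open>H\<^sup>2 P = R\<close> makes \<open>B/A\<close> agree
  with \<open>H\<close> up to order \<open>N\<close>, because \<open>R (AH - B)(AH + B) = x\<^sup>N H\<^sup>2 C\<close>.\<close>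

lemma fps_pade_of_square_identity:
  fixes A B C H P R :: "'a::idom fps"
  assumes sq: "H ^ 2 * P = R" and eq: "R * A ^ 2 = P * B ^ 2 + fps_X ^ N * C"
    and nz: "R $ 0 \<noteq> 0" "A $ 0 * H $ 0 + B $ 0 \<noteq> 0" and k: "k < N"
  shows "(A * H) $ k = B $ k"
proof -
  have id: "(R * (A * H + B)) * (A * H - B) = fps_X ^ N * (H ^ 2 * C)"
  proof -
    have "(R * (A * H + B)) * (A * H - B) = H ^ 2 * (R * A ^ 2) - (H ^ 2 * P) * B ^ 2"
      unfolding sq by (simp add: algebra_simps power2_eq_square)
    also have "\<dots> = fps_X ^ N * (H ^ 2 * C)"
      unfolding eq by (simp add: algebra_simps)
    finally show ?thesis .
  qed
  have "(R * (A * H + B)) $ 0 \<noteq> 0" using nz by simp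
  moreover have "((R * (A * H + B)) * (A * H - B)) $ j = 0" if "j < N" for j
    unfolding id using that by (simp add: fps_X_power_mult_nth)
  ultimately have "(A * H - B) $ k = 0"
    using k by (rule fps_nth_eq_0_if_mult_nth_eq_0)
  thus ?thesis by simp
qed

lemma rev_fps_mult_fps_F_nth_eq_0:
  fixes U V C :: "complex poly"
  assumes s: "\<And>k. s k = ((\<Sum>a\<leftarrow>as. a ^ k) - (\<Sum>b\<leftarrow>bs. b ^ k)) / 2"
    and pell: "poly_of_roots as * U ^ 2 = poly_of_roots bs * V ^ 2 + C"
    and U: "degree U = \<mu>" "lead_coeff U = 1" and V: "degree V = \<nu>" "lead_coeff V = 1"
    and deg: "length as + 2 * \<mu> = length bs + 2 * \<nu>" "degree C + \<nu> + \<mu> < length bs + 2 * \<nu>"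
    and k: "\<nu> < k" "k \<le> \<nu> + \<mu>"
  shows "(rev_fps \<mu> U * fps_F s) $ k = 0"
proof -
  define N where "N = length bs + 2 * \<nu>"
  define A where "A = rev_fps \<mu> U"
  define B where "B = rev_fps \<nu> V"
  have "fps_root_prod as * A ^ 2 = rev_fps N (poly_of_roots as * U ^ 2)"
    using U rev_fps_poly_of_roots_mult_square[of U \<mu> as] by (simp add: N_def A_def flip: deg(1))
  also have "\<dots> = fps_root_prod bs * B ^ 2 + rev_fps N C"
    using V by (simp add: pell N_def B_def rev_fps_add rev_fps_poly_of_roots_mult_square)
  also have "rev_fps N C = fps_X ^ (\<nu> + \<mu> + 1) * rev_fps (N - (\<nu> + \<mu> + 1)) C"
    using deg(2) by (subst rev_fps_shift[of _ "N - (\<nu> + \<mu> + 1)"]) (auto simp: N_def)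
  finally have "(A * fps_F s) $ k = B $ k"
    by (rule fps_pade_of_square_identity[OF fps_F_square[OF s]])
      (use k U V in \<open>simp_all add: A_def B_def rev_fps_nth\<close>)
  thus ?thesis using k V by (simp add: A_def B_def rev_fps_nth)
qed

lemma Fk_linear_equations:
  fixes A :: "complex fps"
  assumes hi: "\<And>j. \<mu> < j \<Longrightarrow> A $ j = 0"
    and vanish: "\<And>k. \<nu> < k \<Longrightarrow> k \<le> \<nu> + \<mu> \<Longrightarrow> (A * fps_F s) $ k = 0"
    and i: "i < \<mu>"
  shows "(\<Sum>j\<le>\<mu>. A $ j * Fk s (int \<nu> + 1 + int i - int j)) = 0"
proof -
  define k where "k = \<nu> + 1 + i"
  have k: "int \<nu> + 1 + int i = int k" by (simp add: k_def)
  have "(\<Sum>j\<le>\<mu>. A $ j * Fk s (int \<nu> + 1 + int i - int j))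
      = (\<Sum>j\<in>{..\<mu>} \<inter> {0..k}. A $ j * Fk s (int k - int j))"
    unfolding k by (rule sum.mono_neutral_right) (auto simp: Fk_def)
  also have "\<dots> = (\<Sum>j=0..k. A $ j * Fk s (int (k - j)))"
    by (rule sum.mono_neutral_cong_left) (use hi in \<open>auto simp: of_nat_diff\<close>)
  also have "\<dots> = (A * fps_F s) $ k" by (simp add: fps_mult_nth fps_F_def)
  also have "\<dots> = 0" using vanish i by (simp add: k_def)
  finally show ?thesis .
qed

lemma detFi_eq_rev_fps_nth:
  assumes vanish: "\<And>k. \<nu> < k \<Longrightarrow> k \<le> \<nu> + \<mu> \<Longrightarrow> (rev_fps \<mu> U * fps_F s) $ k = 0"
    and U: "coeff U \<mu> = 1" and i: "1 \<le> i" "i \<le> \<mu>"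
  shows "detFi s \<nu> \<mu> i = rev_fps \<mu> U $ i * detF s \<nu> \<mu>"
proof -
  have "det (Fmat_i s \<nu> \<mu> i) = rev_fps \<mu> U $ i * det (Fmat s \<nu> \<mu>)"
    by (rule det_Fmat_i_Cramer[OF _ Fk_linear_equations[OF _ vanish] i])
      (simp_all add: U rev_fps_nth)
  thus ?thesis using i by (simp add: detFi_def detF_def)
qed

lemma detFi_1_eq_rev_fps_nth_1:
  assumes "\<And>k. \<nu> < k \<Longrightarrow> k \<le> \<nu> + \<mu> \<Longrightarrow> (rev_fps \<mu> U * fps_F s) $ k = 0"
    and "coeff U \<mu> = 1"
  shows "detFi s \<nu> \<mu> 1 = rev_fps \<mu> U $ 1 * detF s \<nu> \<mu>"
  using detFi_eq_rev_fps_nth[OF assms] by (cases "\<mu> = 0") (simp_all add: detFi_def rev_fps_nth)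

lemma det_relation_at_root:
  assumes vanish: "\<And>k. \<nu> < k \<Longrightarrow> k \<le> \<nu> + \<mu> \<Longrightarrow> (rev_fps \<mu> U * fps_F s) $ k = 0"
    and U: "degree U = \<mu>" "coeff U \<mu> = 1" and root: "poly U x = 0"
  shows "x ^ \<mu> * detF s \<nu> \<mu> + (\<Sum>i=1..\<mu>. x ^ (\<mu> - i) * detFi s \<nu> \<mu> i) = 0"
proof -
  have "x ^ \<mu> * detF s \<nu> \<mu> + (\<Sum>i=1..\<mu>. x ^ (\<mu> - i) * detFi s \<nu> \<mu> i)
      = detF s \<nu> \<mu> * (\<Sum>i\<le>\<mu>. rev_fps \<mu> U $ i * x ^ (\<mu> - i))"
    using U by (simp add: detFi_eq_rev_fps_nth[OF vanish] sum_distrib_left atMost_atLeast0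
        sum.atLeast_Suc_atMost rev_fps_nth algebra_simps)
  also have "(\<Sum>i\<le>\<mu>. rev_fps \<mu> U $ i * x ^ (\<mu> - i)) = (\<Sum>j\<le>\<mu>. coeff U j * x ^ j)"
    by (rule sum.reindex_bij_witness[of _ "\<lambda>j. \<mu> - j" "\<lambda>j. \<mu> - j"]) (auto simp: rev_fps_nth)
  also have "\<dots> = poly U x" using U by (simp add: poly_altdef)
  finally show ?thesis using root by simp
qed

section \<open>The determinant identities from the factorisations of \<open>Z \<mp> L\<close>\<close>

lemma coeff_poly_of_roots_mult_square_subleading:
  fixes U :: "'a::idom poly"
  assumes "degree U \<le> \<mu>" "coeff U \<mu> = 1" "length rs + 2 * \<mu> = Suc k"
  shows "coeff (poly_of_roots rs * U ^ 2) k = 2 * rev_fps \<mu> U $ 1 - sum_list rs"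
proof -
  have "coeff (poly_of_roots rs * U ^ 2) k
      = rev_fps (length rs + 2 * \<mu>) (poly_of_roots rs * U ^ 2) $ 1"
    using assms(3) by (simp add: rev_fps_nth)
  then show ?thesis
    unfolding rev_fps_poly_of_roots_mult_square[OF assms(1)]
    using assms(2) fps_root_prod_nth_1[of rs] by (simp add: power2_eq_square rev_fps_nth)
qed

lemma add_const_eq_diff_const_add_double:
  fixes Z :: "'a::comm_ring_1 poly"
  shows "Z + [:c:] = (Z - [:c:]) + [:2 * c:]"
proof -
  have "[:2 * c:] = [:c:] + [:c:]" by (simp only: mult_2 add_pCons add_0)
  then show ?thesis by (simp add: algebra_simps)
qed

lemma pell_identity_odd:
  fixes Z P Q :: "'a::comm_ring_1 poly"
  assumes fP: "Z - [:c:] = poly_of_roots [b] * P ^ 2"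
    and fQ: "Z + [:c:] = poly_of_roots [a, 1, -1] * Q ^ 2"
  shows "poly_of_roots [b, a, 1, -1] * Q ^ 2
    = poly_of_roots [] * ([:-b, 1:] * P) ^ 2 + smult (2 * c) [:-b, 1:]"
proof -
  have "poly_of_roots [b, a, 1, -1] * Q ^ 2 = [:-b, 1:] * (Z + [:c:])"
    unfolding fQ by (simp add: mult.assoc del: mult_pCons_left mult_pCons_right)
  also have "Z + [:c:] = (Z - [:c:]) + [:2 * c:]" by (rule add_const_eq_diff_const_add_double)
  also have "[:-b, 1:] * \<dots> = ([:-b, 1:] * P) ^ 2 + [:2 * c:] * [:-b, 1:]"
    unfolding fP
    by (simp add: distrib_left power2_eq_square mult_ac del: mult_pCons_left mult_pCons_right)
  finally show ?thesis by simp
qed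

lemma pell_identities_even:
  fixes Z P Q :: "'a::comm_ring_1 poly"
  assumes fP: "Z - [:c:] = poly_of_roots [b, -1] * P ^ 2"
    and fQ: "Z + [:c:] = poly_of_roots [a, 1] * Q ^ 2"
  shows "poly_of_roots [1] * ([:-a, 1:] * Q) ^ 2
      = poly_of_roots [a, b, -1] * P ^ 2 + smult (2 * c) [:-a, 1:]" (is ?W)
    and "poly_of_roots [a, 1, -1] * Q ^ 2
      = poly_of_roots [b] * ([:1, 1:] * P) ^ 2 + smult (2 * c) [:1, 1:]" (is ?V)
proof -
  have "poly_of_roots [1] * ([:-a, 1:] * Q) ^ 2 = [:-a, 1:] * (Z + [:c:])"
    unfolding fQ by (simp add: power2_eq_square mult_ac del: mult_pCons_left mult_pCons_right)
  also have "Z + [:c:] = (Z - [:c:]) + [:2 * c:]" by (rule add_const_eq_diff_const_add_double)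
  also have "[:-a, 1:] * \<dots> = poly_of_roots [a, b, -1] * P ^ 2 + [:2 * c:] * [:-a, 1:]"
    unfolding fP by (simp add: distrib_left mult_ac del: mult_pCons_left mult_pCons_right)
  finally show ?W by simp
  have "poly_of_roots [a, 1, -1] * Q ^ 2 = [:1, 1:] * (Z + [:c:])"
    unfolding fQ by (simp add: mult_ac del: mult_pCons_left mult_pCons_right)
  also have "Z + [:c:] = (Z - [:c:]) + [:2 * c:]" by (rule add_const_eq_diff_const_add_double)
  also have "[:1, 1:] * \<dots> = poly_of_roots [b] * ([:1, 1:] * P) ^ 2 + [:2 * c:] * [:1, 1:]"
    unfolding fP
    by (simp add: distrib_left power2_eq_square mult_ac del: mult_pCons_left mult_pCons_right)
  finally show ?V by simp
qed

lemma monic_linear_mult: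
  fixes P :: "'a::idom poly"
  assumes "degree P = m" "lead_coeff P = 1"
  shows "degree ([:-b, 1:] * P) = m + 1" "lead_coeff ([:-b, 1:] * P) = 1"
proof -
  have eq: "[:-b, 1:] * P = poly_of_roots [b] * P" by simp
  have "P \<noteq> 0" using assms(2) by auto
  then show "degree ([:-b, 1:] * P) = m + 1"
    unfolding eq using assms(1) by (simp add: degree_poly_of_roots_mult del: poly_of_roots_Cons)
  show "lead_coeff ([:-b, 1:] * P) = 1"
    unfolding eq lead_coeff_poly_of_roots_mult by (rule assms(2))
qed

lemma det_identities_odd:
  fixes Z P Q :: "complex poly" and a b c :: complex
  assumes m: "1 \<le> m"
    and fP: "Z - [:c:] = poly_of_roots [b] * P ^ 2"
    and fQ: "Z + [:c:] = poly_of_roots [a, 1, -1] * Q ^ 2"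
    and P: "degree P = m" "lead_coeff P = 1" and Q: "degree Q = m - 1" "lead_coeff Q = 1"
    and s1: "\<And>k. s1 k = (- (a ^ k) - 1 - (-1) ^ k - b ^ k) / 2"
    and s2: "\<And>k. s2 k = (a ^ k + 1 + (-1) ^ k + b ^ k) / 2"
  shows "b ^ (m + 1) * detF s1 (m - 1) (m + 1)
           + (\<Sum>i=1..m+1. b ^ (m + 1 - i) * detFi s1 (m - 1) (m + 1) i) = 0"
    and "- 2 * detFi s2 (m + 1) (m - 1) 1 + (a + coeff Z (2 * m)) * detF s2 (m + 1) (m - 1) = 0"
proof -
  note pell = pell_identity_odd[OF fP fQ]
  note W = monic_linear_mult[OF P, of b]
  have pell': "poly_of_roots [] * ([:-b, 1:] * P) ^ 2
      = poly_of_roots [b, a, 1, -1] * Q ^ 2 + - smult (2 * c) [:-b, 1:]"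
    unfolding pell by (simp del: poly_of_roots_Cons)
  show "b ^ (m + 1) * detF s1 (m - 1) (m + 1)
      + (\<Sum>i=1..m+1. b ^ (m + 1 - i) * detFi s1 (m - 1) (m + 1) i) = 0"
  proof (rule det_relation_at_root[OF _ W(1)])
    fix k assume "m - 1 < k" "k \<le> m - 1 + (m + 1)"
    then show "(rev_fps (m + 1) ([:-b, 1:] * P) * fps_F s1) $ k = 0"
      using m W Q by (intro rev_fps_mult_fps_F_nth_eq_0[OF _ pell']) (auto simp: s1 field_simps)
  qed (use W in simp_all)
  have "coeff Z (2 * m) = coeff (Z + [:c:]) (2 * m)"
    using m by (simp add: coeff_pCons split: nat.split)
  also have "\<dots> = 2 * rev_fps (m - 1) Q $ 1 - sum_list [a, 1, -1]"
    unfolding fQ using m Q by (intro coeff_poly_of_roots_mult_square_subleading) simp_all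
  finally have "a + coeff Z (2 * m) = 2 * rev_fps (m - 1) Q $ 1" by simp
  moreover have "detFi s2 (m + 1) (m - 1) 1 = rev_fps (m - 1) Q $ 1 * detF s2 (m + 1) (m - 1)"
  proof (rule detFi_1_eq_rev_fps_nth_1)
    fix k assume "m + 1 < k" "k \<le> m + 1 + (m - 1)"
    then show "(rev_fps (m - 1) Q * fps_F s2) $ k = 0"
      using m W Q by (intro rev_fps_mult_fps_F_nth_eq_0[OF _ pell]) (auto simp: s2 field_simps)
  qed (use Q in simp)
  ultimately show "- 2 * detFi s2 (m + 1) (m - 1) 1 + (a + coeff Z (2 * m)) * detF s2 (m + 1) (m - 1) = 0"
    by simp
qed

lemma det_identities_even:
  fixes Z P Q :: "complex poly" and a b c :: complex
  assumes fP: "Z - [:c:] = poly_of_roots [b, -1] * P ^ 2"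
    and fQ: "Z + [:c:] = poly_of_roots [a, 1] * Q ^ 2"
    and P: "degree P = m" "lead_coeff P = 1" and Q: "degree Q = m" "lead_coeff Q = 1"
    and s1: "\<And>k. s1 k = (- (a ^ k) + 1 - (-1) ^ k - b ^ k) / 2"
    and s2: "\<And>k. s2 k = (a ^ k + 1 + (-1) ^ k - b ^ k) / 2"
  shows "a ^ (m + 1) * detF s1 m (m + 1) + (\<Sum>i=1..m+1. a ^ (m + 1 - i) * detFi s1 m (m + 1) i) = 0"
    and "- 2 * detFi s2 (m + 1) m 1 + (a + 1 + coeff Z (2 * m + 1)) * detF s2 (m + 1) m = 0"
proof -
  note pell = pell_identities_even[OF fP fQ]
  note W = monic_linear_mult[OF Q, of a] and V = monic_linear_mult[OF P, of "-1"]
  show "a ^ (m + 1) * detF s1 m (m + 1) + (\<Sum>i=1..m+1. a ^ (m + 1 - i) * detFi s1 m (m + 1) i) = 0"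
  proof (rule det_relation_at_root[OF _ W(1)])
    fix k assume "m < k" "k \<le> m + (m + 1)"
    then show "(rev_fps (m + 1) ([:-a, 1:] * Q) * fps_F s1) $ k = 0"
      using W P by (intro rev_fps_mult_fps_F_nth_eq_0[OF _ pell(1)]) (auto simp: s1 field_simps)
  qed (use W in simp_all)
  have "coeff Z (2 * m + 1) = coeff (Z + [:c:]) (2 * m + 1)" by simp
  also have "\<dots> = 2 * rev_fps m Q $ 1 - sum_list [a, 1]"
    unfolding fQ using Q by (intro coeff_poly_of_roots_mult_square_subleading) simp_all
  finally have "a + 1 + coeff Z (2 * m + 1) = 2 * rev_fps m Q $ 1" by simp
  moreover have "detFi s2 (m + 1) m 1 = rev_fps m Q $ 1 * detF s2 (m + 1) m"
  proof (rule detFi_1_eq_rev_fps_nth_1)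
    fix k assume "m + 1 < k" "k \<le> m + 1 + m"
    then show "(rev_fps m Q * fps_F s2) $ k = 0"
      using V Q by (intro rev_fps_mult_fps_F_nth_eq_0[OF _ pell(2)]) (auto simp: s2 field_simps)
  qed (use Q in simp)
  ultimately show "- 2 * detFi s2 (m + 1) m 1 + (a + 1 + coeff Z (2 * m + 1)) * detF s2 (m + 1) m = 0"
    by simp
qed

section \<open>Equioscillation of the Zolotarev polynomial\<close>

lemma abs_diff_less_if_margin:
  fixes f g L \<delta> \<epsilon> G :: real
  assumes f: "\<bar>f\<bar> \<le> L" and \<epsilon>: "0 < \<epsilon>" "\<epsilon> \<le> 1" and G: "g\<^sup>2 \<le> G" "\<bar>f * g\<bar> \<le> G"
    and \<delta>: "0 < \<delta>" "\<epsilon> * G \<le> \<delta> / 4" and margin: "\<delta> \<le> L\<^sup>2 - f\<^sup>2 \<or> \<delta> \<le> f * g"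
  shows "\<bar>f - \<epsilon> * g\<bar> < L"
proof -
  have key: "L\<^sup>2 - (f - \<epsilon> * g)\<^sup>2 = (L\<^sup>2 - f\<^sup>2) + 2 * (\<epsilon> * (f * g)) - \<epsilon>\<^sup>2 * g\<^sup>2"
    by (simp add: power2_eq_square algebra_simps)
  have "\<epsilon>\<^sup>2 * g\<^sup>2 \<le> \<epsilon> * (\<epsilon> * G)"
    using mult_left_mono[OF G(1), of "\<epsilon>\<^sup>2"] \<epsilon> by (simp add: power2_eq_square mult_ac)
  also have "\<dots> \<le> \<epsilon> * (\<delta> / 4)" using \<epsilon> \<delta> by simp
  finally have small: "\<epsilon>\<^sup>2 * g\<^sup>2 \<le> \<epsilon> * (\<delta> / 4)" .
  have "0 < L\<^sup>2 - (f - \<epsilon> * g)\<^sup>2"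
    using margin
  proof
    assume "\<delta> \<le> L\<^sup>2 - f\<^sup>2"
    moreover have "- (\<epsilon> * G) \<le> \<epsilon> * (f * g)"
      using mult_left_mono[of "- G" "f * g" \<epsilon>] G(2) \<epsilon> by (simp add: abs_le_iff)
    moreover have "\<epsilon> * (\<delta> / 4) \<le> \<delta> / 4" using \<epsilon> \<delta> by simp
    ultimately show ?thesis unfolding key using small \<delta> by linarith
  next
    assume "\<delta> \<le> f * g"
    moreover have "0 \<le> L\<^sup>2 - f\<^sup>2" using f abs_le_square_iff by fastforce
    moreover have "\<epsilon> * \<delta> \<le> \<epsilon> * (f * g)" using calculation(1) \<epsilon> by simp
    ultimately show ?thesis unfolding key using small mult_pos_pos[OF \<epsilon>(1) \<delta>(1)] by linarith
  qed
  then show ?thesis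
    using power2_less_imp_less[of "\<bar>f - \<epsilon> * g\<bar>" L] f by simp
qed

lemma perturbation_below_level:
  fixes f g :: "real \<Rightarrow> real"
  assumes K: "compact K" and cont: "continuous_on K f" "continuous_on K g"
    and bound: "\<And>x. x \<in> K \<Longrightarrow> \<bar>f x\<bar> \<le> L"
    and descent: "\<And>x. x \<in> K \<Longrightarrow> \<bar>f x\<bar> = L \<Longrightarrow> 0 < f x * g x"
  shows "\<exists>\<epsilon>>0. \<forall>x\<in>K. \<bar>f x - \<epsilon> * g x\<bar> < L"
proof (cases "K = {}")
  case False
  define \<phi> where "\<phi> x = max (L\<^sup>2 - (f x)\<^sup>2) (f x * g x)" for x
  define \<psi> where "\<psi> x = (g x)\<^sup>2 + \<bar>f x * g x\<bar>" for x
  have "continuous_on K \<phi>" "continuous_on K \<psi>"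
    unfolding \<phi>_def \<psi>_def by (intro continuous_intros cont)+
  then obtain x0 x1 where x0: "x0 \<in> K" "\<And>y. y \<in> K \<Longrightarrow> \<phi> x0 \<le> \<phi> y"
    and x1: "\<And>y. y \<in> K \<Longrightarrow> \<psi> y \<le> \<psi> x1"
    using continuous_attains_inf[OF K False, of \<phi>] continuous_attains_sup[OF K False, of \<psi>] by auto
  define \<delta> where "\<delta> = \<phi> x0"
  define G where "G = \<psi> x1 + 1"
  define \<epsilon> where "\<epsilon> = min (\<delta> / (4 * G)) 1"
  have "0 < \<phi> x0"
  proof (cases "\<bar>f x0\<bar> = L")
    case False
    hence "(f x0)\<^sup>2 < L\<^sup>2"
      using bound[OF x0(1)] power2_strict_mono[of "\<bar>f x0\<bar>" L] by simp
    then show ?thesis by (simp add: \<phi>_def)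
  qed (use descent x0 in \<open>auto simp: \<phi>_def\<close>)
  hence \<delta>: "0 < \<delta>" by (simp add: \<delta>_def)
  have G: "0 < G" "\<And>x. x \<in> K \<Longrightarrow> (g x)\<^sup>2 \<le> G \<and> \<bar>f x * g x\<bar> \<le> G"
    using x1 by (auto simp: G_def \<psi>_def) (smt (verit) abs_ge_zero zero_le_power2)+
  have \<epsilon>: "0 < \<epsilon>" "\<epsilon> \<le> 1" "\<epsilon> * G \<le> \<delta> / 4"
    using \<delta> G(1) by (auto simp: \<epsilon>_def min_def field_simps)
  have "\<bar>f x - \<epsilon> * g x\<bar> < L" if "x \<in> K" for x
    using \<epsilon> G(2)[OF that] \<delta> bound[OF that] x0(2)[OF that]
    by (intro abs_diff_less_if_margin) (auto simp: \<delta>_def \<phi>_def max_def split: if_splits)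
  with \<epsilon>(1) show ?thesis by blast
qed (auto intro: exI[of _ 1])

lemma descent_sign_at_extremum:
  fixes p r2 r3 :: "real poly"
  assumes minus: "p - [:c:] = poly_of_roots [a, b] * r2" and plus: "p + [:c:] = poly_of_roots [u] * r3"
    and x: "x < a" "x < b" "x < u" "-2 < x" and c: "c \<noteq> 0" and ext: "\<bar>poly p x\<bar> = \<bar>c\<bar>"
  shows "0 < poly p x * (poly r2 x * (x + 2) - poly r3 x)"
proof -
  have minus_x: "poly p x - c = ((x - a) * (x - b)) * poly r2 x"
    using arg_cong[OF minus, of "\<lambda>q. poly q x"] by (simp add: poly_poly_of_roots algebra_simps)
  have plus_x: "poly p x + c = (x - u) * poly r3 x"
    using arg_cong[OF plus, of "\<lambda>q. poly q x"] by (simp add: poly_poly_of_roots algebra_simps)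
  have ab: "0 < (x - a) * (x - b)" using x by (simp add: mult_neg_neg)
  have "0 < c * c" using c by (auto simp: zero_less_mult_iff linorder_neq_iff)
  from ext consider "poly p x = c" | "poly p x = - c" by (auto simp: abs_eq_iff)
  then show ?thesis
  proof cases
    case 1
    hence "poly r2 x = 0" "(x - u) * poly r3 x = 2 * c" using minus_x plus_x ab by auto
    hence "0 < c * ((x - u) * poly r3 x)" using \<open>0 < c * c\<close> by simp
    hence "0 < (x - u) * (c * poly r3 x)" by (simp only: mult_ac)
    hence "c * poly r3 x < 0" using x(3) by (simp add: zero_less_mult_iff)
    then show ?thesis using 1 \<open>poly r2 x = 0\<close> by simp
  next
    case 2
    hence "poly r3 x = 0" "((x - a) * (x - b)) * poly r2 x = - 2 * c" using minus_x plus_x x(3) by auto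
    hence "0 < - c * (((x - a) * (x - b)) * poly r2 x)" using \<open>0 < c * c\<close> by simp
    hence "0 < ((x - a) * (x - b)) * (- c * poly r2 x)" by (simp only: mult_ac)
    hence "0 < - c * poly r2 x" using ab by (rule zero_less_mult_pos)
    then show ?thesis using 2 \<open>poly r3 x = 0\<close> x(4) by (simp add: mult.assoc[symmetric] mult_neg_pos)
  qed
qed

lemma sum_order_le_degree_finite:
  fixes p :: "real poly"
  assumes "p \<noteq> 0" "finite T"
  shows "(\<Sum>x\<in>T. order x p) \<le> degree p"
proof -
  have "(\<Sum>x\<in>T. order x p) = (\<Sum>x\<in>T \<inter> {x. poly p x = 0}. order x p)"
    by (rule sum.mono_neutral_right) (use assms in \<open>auto simp: order_root\<close>)
  also have "\<dots> \<le> (\<Sum>x | poly p x = 0. order x p)"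
    by (rule sum_mono2[OF poly_roots_finite[OF assms(1)]]) auto
  also have "\<dots> \<le> degree p" by (rule sum_order_le_degree[OF assms(1)])
  finally show ?thesis .
qed

lemma prod_power_eq_square_if_even:
  fixes g :: "'a \<Rightarrow> 'b::comm_monoid_mult"
  assumes "\<And>x. x \<in> I \<Longrightarrow> even (f x)"
  shows "(\<Prod>x\<in>I. g x ^ f x) = (\<Prod>x\<in>I. g x ^ (f x div 2)) ^ 2"
proof -
  have "(\<Prod>x\<in>I. g x ^ (f x div 2)) ^ 2 = (\<Prod>x\<in>I. g x ^ (f x div 2) * g x ^ (f x div 2))"
    by (simp add: power2_eq_square prod.distrib)
  also have "\<dots> = (\<Prod>x\<in>I. g x ^ f x)"
    using assms by (intro prod.cong refl) (metis power_add even_two_times_div_two mult_2)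
  finally show ?thesis ..
qed

text \<open>\<open>ups\<close> and \<open>downs\<close> list, with multiplicity, the roots of \<open>p - L\<close> and \<open>p + L\<close>,
  which are all real.\<close>

locale zolotarev_real =
  fixes p :: "real poly" and n :: nat and L \<alpha> \<beta> :: real and ups downs :: "real list"
  assumes n: "2 \<le> n" and degree: "degree p = n" and monic: "lead_coeff p = 1"
    and L: "0 < L" and \<alpha>: "1 < \<alpha>" and \<beta>: "\<alpha> < \<beta>"
    and level_set: "\<And>x. \<bar>poly p x\<bar> \<le> L \<longleftrightarrow> x \<in> {-1..1} \<union> {\<alpha>..\<beta>}"
    and ups: "p - [:L:] = poly_of_roots ups"
    and downs: "p + [:L:] = poly_of_roots downs"
    and optimal: "\<And>q. degree q \<le> n - 2 \<Longrightarrow> \<not> (\<forall>x\<in>{-1..1}. \<bar>poly p x - poly q x\<bar> < L)"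
begin

lemma poly_eq_L_iff: "poly p x = L \<longleftrightarrow> x \<in> set ups"
  using arg_cong[OF ups, of "\<lambda>q. poly q x"]
  by (metis poly_diff poly_const_conv right_minus_eq poly_of_roots_eq_0_iff)

lemma poly_eq_neg_L_iff: "poly p x = - L \<longleftrightarrow> x \<in> set downs"
  using arg_cong[OF downs, of "\<lambda>q. poly q x"]
  by (metis poly_add poly_const_conv eq_neg_iff_add_eq_0 poly_of_roots_eq_0_iff)

lemma abs_poly_eq_L_iff: "\<bar>poly p x\<bar> = L \<longleftrightarrow> x \<in> set ups \<union> set downs"
  using L by (auto simp: abs_eq_iff' poly_eq_L_iff poly_eq_neg_L_iff)

lemma ups_downs_disjoint: "x \<in> set ups \<Longrightarrow> x \<notin> set downs"
  using poly_eq_L_iff poly_eq_neg_L_iff L by force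

lemma degree_add_const: "degree (p + [:c:]) = n"
  using degree n by (subst degree_add_eq_left) auto

lemma length_ups: "length ups = n" and length_downs: "length downs = n"
  using degree_add_const[of "- L"] degree_add_const[of L]
  by (simp_all flip: degree_poly_of_roots ups downs add: diff_conv_add_uminus)

lemma extremal_at_right_end:
  assumes "a < b" "\<bar>poly p a\<bar> \<le> L" "\<And>x. a < x \<Longrightarrow> x \<le> b \<Longrightarrow> L < \<bar>poly p x\<bar>"
  shows "\<bar>poly p a\<bar> = L"
proof (rule ccontr)
  assume ne: "\<bar>poly p a\<bar> \<noteq> L"
  moreover have "continuous_on {a..b} (\<lambda>x. \<bar>poly p x\<bar>)" by (intro continuous_intros)
  ultimately obtain x where "a \<le> x" "x \<le> b" "\<bar>poly p x\<bar> = L"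
    using IVT'[of "\<lambda>x. \<bar>poly p x\<bar>" a L b] assms by force
  then show False using ne assms(3)[of x] by (cases "x = a") auto
qed

lemma extremal_at_left_end:
  assumes "a < b" "\<bar>poly p b\<bar> \<le> L" "\<And>x. a \<le> x \<Longrightarrow> x < b \<Longrightarrow> L < \<bar>poly p x\<bar>"
  shows "\<bar>poly p b\<bar> = L"
proof (rule ccontr)
  assume ne: "\<bar>poly p b\<bar> \<noteq> L"
  moreover have "continuous_on {a..b} (\<lambda>x. \<bar>poly p x\<bar>)" by (intro continuous_intros)
  ultimately obtain x where "a \<le> x" "x \<le> b" "\<bar>poly p x\<bar> = L"
    using IVT2'[of "\<lambda>x. \<bar>poly p x\<bar>" b L a] assms by force
  then show False using ne assms(3)[of x] by (cases "x = b") auto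
qed

lemma endpoints_extremal:
  "\<bar>poly p (-1)\<bar> = L" "\<bar>poly p 1\<bar> = L" "\<bar>poly p \<alpha>\<bar> = L" "\<bar>poly p \<beta>\<bar> = L"
proof -
  have out: "L < \<bar>poly p x\<bar> \<longleftrightarrow> x \<notin> {-1..1} \<union> {\<alpha>..\<beta>}" for x
    using level_set[of x] by linarith
  show "\<bar>poly p (-1)\<bar> = L"
    by (rule extremal_at_left_end[of "-2"]) (use level_set out \<alpha> in auto)
  show "\<bar>poly p 1\<bar> = L"
    by (rule extremal_at_right_end[of _ "(1 + \<alpha>) / 2"]) (use level_set out \<alpha> in auto)
  show "\<bar>poly p \<alpha>\<bar> = L"
    by (rule extremal_at_left_end[of "(1 + \<alpha>) / 2"]) (use level_set out \<alpha> \<beta> in auto)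
  show "\<bar>poly p \<beta>\<bar> = L"
    by (rule extremal_at_right_end[of _ "\<beta> + 1"]) (use level_set out \<alpha> \<beta> in auto)
qed

lemma exists_up_beyond_1: "\<exists>r\<in>set ups. 1 < r"
proof (rule ccontr)
  assume "\<not> ?thesis"
  hence le: "\<forall>r\<in>set ups. r < \<alpha>" using \<alpha> by force
  hence "\<alpha> \<notin> set ups" "\<beta> \<notin> set ups" using \<beta> by fastforce+
  hence "poly p \<alpha> \<noteq> L" "poly p \<beta> \<noteq> L" by (simp_all add: poly_eq_L_iff)
  hence "poly p \<alpha> = - L" "poly p \<beta> = - L" using endpoints_extremal(3,4) by arith+
  moreover have "poly (poly_of_roots ups) \<alpha> < poly (poly_of_roots ups) \<beta>"
    using poly_of_roots_strict_mono[OF le \<beta>] length_ups n by (cases ups) auto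
  ultimately show False by (simp flip: ups)
qed

lemma exists_down_beyond_1: "\<exists>r\<in>set downs. 1 < r"
proof (rule ccontr)
  assume "\<not> ?thesis"
  hence le: "\<forall>r\<in>set downs. r < \<alpha>" using \<alpha> by force
  hence "\<alpha> \<notin> set downs" "\<beta> \<notin> set downs" using \<beta> by fastforce+
  hence "poly p \<alpha> \<noteq> - L" "poly p \<beta> \<noteq> - L" by (simp_all add: poly_eq_neg_L_iff)
  hence "poly p \<alpha> = L" "poly p \<beta> = L" using endpoints_extremal(3,4) by arith+
  moreover have "poly (poly_of_roots downs) \<alpha> < poly (poly_of_roots downs) \<beta>"
    using poly_of_roots_strict_mono[OF le \<beta>] length_downs n by (cases downs) auto
  ultimately show False by (simp flip: downs)
qed

lemma no_descent_direction:
  assumes "degree q \<le> n - 2" "\<And>x. x \<in> {-1..1} \<Longrightarrow> \<bar>poly p x\<bar> = L \<Longrightarrow> 0 < poly p x * poly q x"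
  shows False
proof -
  obtain \<epsilon> where "\<forall>x\<in>{-1..1}. \<bar>poly p x - \<epsilon> * poly q x\<bar> < L"
    using perturbation_below_level[of "{-1..1}" "poly p" "poly q" L] level_set assms(2)
    by (force intro: continuous_intros)
  moreover have "degree (smult \<epsilon> q) \<le> n - 2" using assms(1) by simp
  ultimately show False using optimal by fastforce
qed

text \<open>If \<open>p = c\<close> at two points \<open>a \<noteq> b\<close> and \<open>p = -c\<close> at \<open>u\<close>, all beyond 1, then
  \<open>(p - c) / ((x - a)(x - b)) \<cdot> (x + 2) - (p + c) / (x - u)\<close> has degree at most \<open>n - 2\<close>
  and the sign of \<open>p\<close> at every extremal point of \<open>[-1, 1]\<close>, contradicting optimality.\<close>

lemma no_equal_extrema_beyond_1:
  assumes c: "c = L \<or> c = - L" and ab: "1 < a" "1 < b" "a \<noteq> b" "poly p a = c" "poly p b = c"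
    and u: "1 < u" "poly p u = - c"
  shows False
proof -
  obtain r1 where r1: "p - [:c:] = [:-a, 1:] * r1"
    using ab(4) by (metis dvdE poly_eq_0_iff_dvd poly_diff poly_const_conv right_minus_eq)
  have "poly r1 b = 0" using arg_cong[OF r1, of "\<lambda>q. poly q b"] ab by simp
  then obtain r2 where "r1 = [:-b, 1:] * r2" by (metis dvdE poly_eq_0_iff_dvd)
  hence r2: "p - [:c:] = poly_of_roots [a, b] * r2"
    using r1 by (simp add: mult.assoc del: mult_pCons_left mult_pCons_right)
  obtain r3 where "p + [:c:] = [:-u, 1:] * r3"
    using u(2) by (metis dvdE poly_eq_0_iff_dvd poly_add poly_const_conv eq_neg_iff_add_eq_0)
  hence r3: "p + [:c:] = poly_of_roots [u] * r3" by simp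
  have lc: "lead_coeff (p - [:c:]) = 1" "lead_coeff (p + [:c:]) = 1"
    "degree (p - [:c:]) = n" "degree (p + [:c:]) = n"
    using degree_add_const[of "- c"] degree_add_const[of c] monic n degree
    by (simp_all add: diff_conv_add_uminus coeff_pCons split: nat.split)
  hence lc': "lead_coeff (poly_of_roots [a, b] * r2) = 1" "lead_coeff (poly_of_roots [u] * r3) = 1"
    "degree (poly_of_roots [a, b] * r2) = n" "degree (poly_of_roots [u] * r3) = n"
    unfolding r2 r3 .
  have "lead_coeff r2 = 1" "lead_coeff r3 = 1"
    using lc'(1,2) unfolding lead_coeff_poly_of_roots_mult .
  hence "r2 \<noteq> 0" "r3 \<noteq> 0" "lead_coeff (poly_of_roots [-2] * r2) = lead_coeff r3"
    by (auto simp only: lead_coeff_poly_of_roots_mult) simp_all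
  moreover from this have "degree (poly_of_roots [-2] * r2) = Suc (n - 2)" "degree r3 = Suc (n - 2)"
    using lc' n by (simp_all add: degree_poly_of_roots_mult del: poly_of_roots_Cons)
  ultimately have "degree (poly_of_roots [-2] * r2 - r3) \<le> n - 2"
    using degree_diff_le_if_same_lead by blast
  moreover have "0 < poly p x * poly (poly_of_roots [-2] * r2 - r3) x"
    if "x \<in> {-1..1}" "\<bar>poly p x\<bar> = L" for x
    using descent_sign_at_extremum[OF r2 r3] that ab u c L by (auto simp: algebra_simps)
  ultimately show False by (rule no_descent_direction)
qed

lemma values_at_alpha_beta: "poly p \<alpha> = - L" "poly p \<beta> = L"
proof -
  obtain u where u: "u \<in> set downs" "1 < u" using exists_down_beyond_1 by blast
  obtain v where v: "v \<in> set ups" "1 < v" using exists_up_beyond_1 by blast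
  have ext: "poly p \<alpha> = L \<or> poly p \<alpha> = - L" "poly p \<beta> = L \<or> poly p \<beta> = - L"
    using endpoints_extremal(3,4) by arith+
  have "poly p \<alpha> \<noteq> L"
  proof
    assume a: "poly p \<alpha> = L"
    hence b: "poly p \<beta> = - L"
      using ext(2) no_equal_extrema_beyond_1[of L \<alpha> \<beta> u] u \<alpha> \<beta> poly_eq_neg_L_iff by force
    have "\<forall>r\<in>set ups. r < \<beta>"
    proof
      fix r assume r: "r \<in> set ups"
      show "r < \<beta>"
      proof (rule ccontr)
        assume "\<not> r < \<beta>"
        hence "1 < r" "r \<noteq> \<alpha>" using \<alpha> \<beta> by auto
        thus False using no_equal_extrema_beyond_1[of L r \<alpha> \<beta>] r a b \<alpha> \<beta> poly_eq_L_iff by force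
      qed
    qed
    hence "0 < poly (poly_of_roots ups) \<beta>" by (rule poly_of_roots_pos)
    thus False using b L by (simp flip: ups)
  qed
  thus "poly p \<alpha> = - L" using ext(1) by simp
  thus "poly p \<beta> = L"
    using ext(2) no_equal_extrema_beyond_1[of "- L" \<alpha> \<beta> v] v \<alpha> \<beta> poly_eq_L_iff by force
qed

lemma up_beyond_1_eq_beta: "x \<in> set ups \<Longrightarrow> 1 < x \<Longrightarrow> x = \<beta>"
  using no_equal_extrema_beyond_1[of L x \<beta> \<alpha>] values_at_alpha_beta poly_eq_L_iff \<alpha> \<beta> by force

lemma down_beyond_1_eq_alpha: "x \<in> set downs \<Longrightarrow> 1 < x \<Longrightarrow> x = \<alpha>"
  using no_equal_extrema_beyond_1[of "- L" x \<alpha> \<beta>] values_at_alpha_beta poly_eq_neg_L_iff \<alpha> \<beta> by force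

lemma value_at_1: "poly p 1 = - L"
proof (rule ccontr)
  assume "poly p 1 \<noteq> - L"
  hence "0 < poly p 1" using endpoints_extremal(2) L by arith
  moreover have "poly p \<alpha> < 0" using values_at_alpha_beta L by simp
  ultimately obtain x where "1 < x" "x < \<alpha>" "poly p x = 0" using poly_IVT_neg \<alpha> by blast
  thus False using level_set[of x] L \<beta> by auto
qed

lemma extremal_points:
  assumes "x \<in> set ups \<union> set downs"
  shows "x \<in> {-1..1} \<or> x = \<alpha> \<or> x = \<beta>"
proof (cases "1 < x")
  case True
  then show ?thesis using assms up_beyond_1_eq_beta down_beyond_1_eq_alpha by auto
next
  case False
  have "\<bar>poly p x\<bar> = L" using assms abs_poly_eq_L_iff by simp
  then show ?thesis using level_set[of x] False \<alpha> by auto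
qed

lemma pderiv_nonzero: "pderiv p \<noteq> 0"
  using degree n by (simp add: pderiv_eq_0_iff)

lemma Suc_order_pderiv:
  assumes "x \<in> set ups \<union> set downs"
  shows "Suc (order x (pderiv p)) = count_list ups x + count_list downs x"
proof (cases "x \<in> set ups")
  case True
  hence "order x (p - [:L:]) = Suc (order x (pderiv (p - [:L:])))"
    by (intro order_pderiv) (simp_all add: ups)
  also have "pderiv (p - [:L:]) = pderiv p" by (simp add: pderiv_diff pderiv_pCons)
  finally have "count_list ups x = Suc (order x (pderiv p))"
    unfolding ups order_poly_of_roots .
  moreover have "count_list downs x = 0" using True ups_downs_disjoint by (simp add: count_list_0_iff)
  ultimately show ?thesis by simp
next
  case False
  hence "x \<in> set downs" using assms by simp
  hence "order x (p + [:L:]) = Suc (order x (pderiv (p + [:L:])))"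
    by (intro order_pderiv) (simp_all add: downs)
  also have "pderiv (p + [:L:]) = pderiv p" by (simp add: pderiv_add pderiv_pCons)
  finally have "count_list downs x = Suc (order x (pderiv p))"
    unfolding downs order_poly_of_roots .
  moreover have "count_list ups x = 0" using False by (simp add: count_list_0_iff)
  ultimately show ?thesis by simp
qed

lemma pderiv_zero_at_interior_extremum:
  assumes "x \<in> set ups \<union> set downs" "-1 < x" "x < 1"
  shows "poly (pderiv p) x = 0"
proof -
  define d where "d = min (x + 1) (1 - x)"
  have d: "0 < d" using assms by (simp add: d_def)
  have near: "\<bar>poly p y\<bar> \<le> L" if "\<bar>x - y\<bar> < d" for y
    using level_set[of y] that by (auto simp: d_def)
  show ?thesis
  proof (cases "x \<in> set ups")
    case True
    hence "\<forall>y. \<bar>x - y\<bar> < d \<longrightarrow> poly p y \<le> poly p x" using near poly_eq_L_iff by force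
    then show ?thesis by (rule DERIV_local_max[OF poly_DERIV d])
  next
    case False
    hence "\<forall>y. \<bar>x - y\<bar> < d \<longrightarrow> poly p x \<le> poly p y"
      using assms(1) near poly_eq_neg_L_iff by force
    then show ?thesis by (rule DERIV_local_min[OF poly_DERIV d])
  qed
qed

lemma pderiv_root_in_gap: "\<exists>\<xi>. 1 < \<xi> \<and> \<xi> < \<alpha> \<and> poly (pderiv p) \<xi> = 0"
proof -
  have "poly p 1 = poly p \<alpha>" using value_at_1 values_at_alpha_beta by simp
  moreover have "continuous_on {1..\<alpha>} (poly p)" by (intro continuous_intros)
  moreover have "poly p differentiable (at x)" for x
    using poly_DERIV real_differentiable_def by blast
  ultimately obtain \<xi> where "1 < \<xi>" "\<xi> < \<alpha>" "DERIV (poly p) \<xi> :> 0"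
    using Rolle[OF \<alpha>, of "poly p"] by blast
  moreover have "DERIV (poly p) \<xi> :> poly (pderiv p) \<xi>" by (rule poly_DERIV)
  ultimately show ?thesis using DERIV_unique by blast
qed

lemma sum_order_pderiv_le: "(\<Sum>x\<in>set ups \<union> set downs. order x (pderiv p)) \<le> n - 2"
proof -
  obtain \<xi> where \<xi>: "1 < \<xi>" "\<xi> < \<alpha>" "poly (pderiv p) \<xi> = 0" using pderiv_root_in_gap by blast
  hence "\<xi> \<notin> set ups \<union> set downs" using extremal_points \<beta> by fastforce
  moreover have "0 < order \<xi> (pderiv p)" using \<xi>(3) pderiv_nonzero by (simp add: order_root)
  moreover have "(\<Sum>x\<in>insert \<xi> (set ups \<union> set downs). order x (pderiv p)) \<le> n - 1"
    using sum_order_le_degree_finite[OF pderiv_nonzero] degree by (simp add: degree_pderiv)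
  ultimately show ?thesis by simp
qed

lemma sum_multiplicities: "(\<Sum>x\<in>set ups \<union> set downs. count_list ups x + count_list downs x) = 2 * n"
  using sum_count_set[of ups "set ups \<union> set downs"] sum_count_set[of downs "set ups \<union> set downs"]
  by (simp add: sum.distrib length_ups length_downs)

lemma extremal_endpoints_mem: "\<beta> \<in> set ups" "\<alpha> \<in> set downs" "1 \<in> set downs"
  "-1 \<in> set ups \<union> set downs"
  using values_at_alpha_beta value_at_1 endpoints_extremal(1) poly_eq_L_iff poly_eq_neg_L_iff
    abs_poly_eq_L_iff by auto

text \<open>Counting: the \<open>2n\<close> roots of \<open>p \<mp> L\<close> force \<open>p'\<close> (of degree \<open>n - 1\<close>, with a root
  in \<open>]1, \<alpha>[\<close>) to vanish to order \<open>\<ge> 1\<close> at every interior extremal point, which leaves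
  no room: the endpoints are simple and the interior extremal points double.\<close>

lemma root_multiplicities:
  shows "count_list ups \<beta> = 1" "count_list downs \<alpha> = 1" "count_list downs 1 = 1"
    "count_list ups (-1) + count_list downs (-1) = 1"
    "\<And>x. x \<in> set ups \<union> set downs - {-1, 1, \<alpha>, \<beta>} \<Longrightarrow> count_list ups x + count_list downs x = 2"
proof -
  define E where "E = set ups \<union> set downs"
  define I where "I = E - {-1, 1, \<alpha>, \<beta>}"
  define ov where "ov x = count_list ups x + count_list downs x" for x
  have fin: "finite E" "finite I" by (simp_all add: E_def I_def)
  have E: "E = I \<union> {-1, 1, \<alpha>, \<beta>}" using extremal_endpoints_mem by (auto simp: E_def I_def)
  have ov: "ov x = Suc (order x (pderiv p))" if "x \<in> E" for x
    using Suc_order_pderiv that by (simp add: E_def ov_def)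
  have I2: "2 \<le> ov x" if "x \<in> I" for x
  proof -
    have "x \<in> E" "-1 < x" "x < 1" using that extremal_points[of x] by (auto simp: E_def I_def)
    hence "poly (pderiv p) x = 0" using pderiv_zero_at_interior_extremum by (simp add: E_def)
    thus ?thesis using ov[OF \<open>x \<in> E\<close>] pderiv_nonzero by (simp add: order_root)
  qed
  have "sum ov E = (\<Sum>x\<in>E. order x (pderiv p) + 1)" using ov by (intro sum.cong) auto
  also have "\<dots> = (\<Sum>x\<in>E. order x (pderiv p)) + card E" by (simp add: sum_Suc)
  finally have "2 * n \<le> n - 2 + card E"
    using sum_multiplicities sum_order_pderiv_le by (simp add: E_def ov_def)
  moreover have "card E = card I + 4" "sum ov E = sum ov I + (ov (-1) + ov 1 + ov \<alpha> + ov \<beta>)"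
    unfolding E using fin \<alpha> \<beta> by (simp_all add: card_Un_disjoint sum.union_disjoint I_def)
  moreover have "2 * card I \<le> sum ov I" using sum_mono[of I "\<lambda>_. 2" ov] I2 by simp
  moreover have "1 \<le> ov (-1)" "1 \<le> ov 1" "1 \<le> ov \<alpha>" "1 \<le> ov \<beta>"
    using ov E by auto
  moreover have "sum ov E = 2 * n" using sum_multiplicities by (simp add: E_def ov_def)
  ultimately have ends: "ov (-1) = 1" "ov 1 = 1" "ov \<alpha> = 1" "ov \<beta> = 1" and "sum ov I = 2 * card I"
    using n by linarith+
  have "ov x = 2" if "x \<in> I" for x
  proof -
    have "sum ov I = ov x + sum ov (I - {x})" using that fin by (simp add: sum.remove)
    moreover have "2 * card (I - {x}) \<le> sum ov (I - {x})"
      using sum_mono[of "I - {x}" "\<lambda>_. 2" ov] I2 by simp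
    ultimately show ?thesis
      using \<open>sum ov I = 2 * card I\<close> I2[OF that] that fin by (simp add: card_Diff_singleton)
  qed
  moreover have "count_list downs \<beta> = 0" "count_list ups \<alpha> = 0" "count_list ups 1 = 0"
    using extremal_endpoints_mem ups_downs_disjoint by (auto simp: count_list_0_iff)
  ultimately show "count_list ups \<beta> = 1" "count_list downs \<alpha> = 1" "count_list downs 1 = 1"
    "count_list ups (-1) + count_list downs (-1) = 1"
    "\<And>x. x \<in> set ups \<union> set downs - {-1, 1, \<alpha>, \<beta>} \<Longrightarrow> count_list ups x + count_list downs x = 2"
    using ends by (simp_all add: ov_def E_def I_def)
qed

lemma counts_even_off_endpoints:
  assumes "x \<in> set ups \<union> set downs - {-1, 1, \<alpha>, \<beta>}"
  shows "even (count_list ups x)" "even (count_list downs x)"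
proof -
  have "count_list ups x = 0 \<or> count_list downs x = 0"
    using ups_downs_disjoint[of x] by (auto simp: count_list_0_iff)
  with root_multiplicities(5)[OF assms]
  show "even (count_list ups x)" "even (count_list downs x)" by auto
qed

lemma factorisation:
  obtains P Q e where "e \<le> 1" "lead_coeff P = 1" "lead_coeff Q = 1"
    "p - [:L:] = poly_of_roots (\<beta> # replicate e (-1)) * P ^ 2"
    "p + [:L:] = poly_of_roots (\<alpha> # 1 # replicate (1 - e) (-1)) * Q ^ 2"
proof -
  define E where "E = set ups \<union> set downs"
  define I where "I = E - {-1, 1, \<alpha>, \<beta>}"
  have fin: "finite E" "finite I" by (simp_all add: E_def I_def)
  have split: "(\<Prod>x\<in>E. f x) = f (-1) * f 1 * f \<alpha> * f \<beta> * (\<Prod>x\<in>I. f x)" for f :: "real \<Rightarrow> real poly"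
  proof -
    have EI: "E = insert (-1) (insert 1 (insert \<alpha> (insert \<beta> I)))"
      using extremal_endpoints_mem by (auto simp: E_def I_def)
    show ?thesis unfolding EI using fin \<alpha> \<beta> by (simp add: I_def mult.assoc)
  qed
  have square: "(\<Prod>x\<in>I. [:-x, 1:] ^ count_list rs x) = (\<Prod>x\<in>I. [:-x, 1:] ^ (count_list rs x div 2)) ^ 2"
    if "rs = ups \<or> rs = downs" for rs
    using that counts_even_off_endpoints by (intro prod_power_eq_square_if_even) (auto simp: I_def E_def)
  define P where "P = (\<Prod>x\<in>I. [:-x, 1:] ^ (count_list ups x div 2))"
  define Q where "Q = (\<Prod>x\<in>I. [:-x, 1:] ^ (count_list downs x div 2))"
  have zeros: "count_list ups \<alpha> = 0" "count_list ups 1 = 0" "count_list downs \<beta> = 0"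
    using extremal_endpoints_mem ups_downs_disjoint by (auto simp: count_list_0_iff)
  have "count_list downs (-1) = 1 - count_list ups (-1)" using root_multiplicities(4) by simp
  have "p - [:L:] = (\<Prod>x\<in>E. [:-x, 1:] ^ count_list ups x)"
    using ups poly_of_roots_eq_prod_count[OF fin(1), of ups] by (simp add: E_def)
  also have "\<dots> = poly_of_roots (\<beta> # replicate (count_list ups (-1)) (-1)) * P ^ 2"
    unfolding split square[OF disjI1, OF refl] P_def
    using root_multiplicities(1) zeros by (simp add: mult_ac)
  finally have up: "p - [:L:] = poly_of_roots (\<beta> # replicate (count_list ups (-1)) (-1)) * P ^ 2" .
  have "p + [:L:] = (\<Prod>x\<in>E. [:-x, 1:] ^ count_list downs x)"
    using downs poly_of_roots_eq_prod_count[OF fin(1), of downs] by (simp add: E_def)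
  also have "\<dots> = poly_of_roots (\<alpha> # 1 # replicate (1 - count_list ups (-1)) (-1)) * Q ^ 2"
    unfolding split square[OF disjI2, OF refl] Q_def
    using root_multiplicities(2,3) zeros \<open>count_list downs (-1) = 1 - count_list ups (-1)\<close>
    by (simp add: mult_ac)
  finally have down:
    "p + [:L:] = poly_of_roots (\<alpha> # 1 # replicate (1 - count_list ups (-1)) (-1)) * Q ^ 2" .
  have "lead_coeff P = 1" "lead_coeff Q = 1"
    by (simp_all add: P_def Q_def lead_coeff_prod lead_coeff_power)
  moreover have "count_list ups (-1) \<le> 1" using root_multiplicities(4) by simp
  ultimately show ?thesis using that up down by blast
qed

end

section \<open>The Zolotarev polynomial is real and factors\<close>

interpretation of_real_poly_hom: map_poly_inj_idom_hom of_real ..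

lemma map_poly_of_real_poly_of_roots:
  "map_poly of_real (poly_of_roots rs) = poly_of_roots (map of_real rs :: 'a::{real_algebra_1, idom} list)"
  by (induction rs) (simp_all add: of_real_poly_hom.hom_mult map_poly_pCons del: mult_pCons_left)

lemma poly_eq_0_if_vanishes_on_interval:
  fixes p :: "real poly"
  assumes "\<And>x. x \<in> {-1..1} \<Longrightarrow> poly p x = 0"
  shows "p = 0"
proof (rule ccontr)
  assume "p \<noteq> 0"
  hence "finite {-1..1::real}" using finite_subset[OF _ poly_roots_finite] assms by blast
  thus False using infinite_Icc[of "-1::real" 1] by simp
qed

lemma real_poly_if_real_on_interval:
  fixes Z :: "complex poly"
  assumes "\<And>x. x \<in> {-1..1} \<Longrightarrow> poly Z (of_real x) \<in> \<real>"
  shows "Z = map_poly of_real (map_poly Re Z)"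
proof -
  have "poly (map_poly Im Z) x = Im (poly Z (of_real x))" for x
    by (induction Z) (auto simp: map_poly_pCons)
  hence "map_poly Im Z = 0"
    using assms by (intro poly_eq_0_if_vanishes_on_interval) (simp add: complex_is_Real_iff)
  hence "Im (coeff Z i) = 0" for i by (metis coeff_0 coeff_map_poly zero_complex.sel(2))
  then show ?thesis by (intro poly_eqI) (simp add: coeff_map_poly complex_eq_iff)
qed

lemma poly_of_roots_if_roots_real:
  fixes p :: "real poly"
  assumes "lead_coeff p = 1" and "\<And>z :: complex. poly (map_poly of_real p) z = 0 \<Longrightarrow> z \<in> \<real>"
  shows "\<exists>rs. p = poly_of_roots rs"
  using assms
proof (induction "degree p" arbitrary: p)
  case 0
  hence "p = 1" by (metis degree_eq_zeroE coeff_pCons_0 one_pCons)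
  then show ?case by (intro exI[of _ "[]"]) simp
next
  case (Suc k)
  have "\<not> constant (poly (map_poly (of_real :: real \<Rightarrow> complex) p))"
    using Suc(2) constant_degree[of "map_poly of_real p"] by simp
  then obtain z :: complex where z: "poly (map_poly of_real p) z = 0"
    using fundamental_theorem_of_algebra by blast
  then obtain r where r: "z = of_real r" using Suc(4) by (auto elim: Reals_cases)
  have "poly p r = 0" using z r by simp
  then obtain q where "p = [:-r, 1:] * q" by (metis dvdE poly_eq_0_iff_dvd)
  hence q: "p = poly_of_roots [r] * q" by simp
  have "lead_coeff q = 1" using Suc(3) unfolding q lead_coeff_poly_of_roots_mult .
  moreover from this have "degree q = k"
    using Suc(2) unfolding q by (subst (asm) degree_poly_of_roots_mult) auto
  moreover have "poly (map_poly of_real q) w = 0 \<Longrightarrow> w \<in> \<real>" for w :: complex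
    using Suc(4)[of w] unfolding q of_real_poly_hom.hom_mult by simp
  ultimately obtain rs where "q = poly_of_roots rs" using Suc(1) by blast
  then show ?case using q by (intro exI[of _ "r # rs"]) simp
qed

lemma sup_norm_I_less:
  assumes "\<And>x. x \<in> {-1..1} \<Longrightarrow> cmod (poly P (of_real x)) < L"
  shows "sup_norm_I P < L"
proof -
  have "continuous_on {-1..1} (\<lambda>x::real. cmod (poly P (of_real x)))" by (intro continuous_intros)
  then obtain x0 where x0: "x0 \<in> {-1..1}"
    "\<And>y. y \<in> {-1..1} \<Longrightarrow> cmod (poly P (of_real y)) \<le> cmod (poly P (of_real x0))"
    using continuous_attains_sup[of "{-1..1::real}"] by force
  hence "sup_norm_I P = cmod (poly P (of_real x0))"
    unfolding sup_norm_I_def by (intro cSup_eq_maximum) auto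
  with assms x0(1) show ?thesis by simp
qed

lemma zolotarev_not_improvable:
  assumes n: "2 \<le> n" and zol: "is_zolotarev n \<sigma> (map_poly of_real p)" and q: "degree q \<le> n - 2"
  shows "\<not> (\<forall>x\<in>{-1..1}. \<bar>poly p x - poly q x\<bar> < sup_norm_I (map_poly of_real p))"
proof
  assume less: "\<forall>x\<in>{-1..1}. \<bar>poly p x - poly q x\<bar> < sup_norm_I (map_poly of_real p)"
  have p: "degree p = n" "coeff p n = 1"
    using zol by (auto simp: is_zolotarev_def zol_class_def of_real_hom.degree_map_poly_hom)
  have "complex_of_real (coeff p (n - 1)) = complex_of_real (- real n * \<sigma>)"
    using zol by (simp add: is_zolotarev_def zol_class_def)
  hence "coeff p (n - 1) = - real n * \<sigma>" by (simp only: of_real_eq_iff)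
  have "degree (- q) < degree p" using q n p by simp
  hence "degree (p - q) = n" using degree_add_eq_left[of "- q" p] p by simp
  moreover have "coeff q n = 0" "coeff q (n - 1) = 0" using q n by (auto intro: coeff_eq_0)
  ultimately have "map_poly of_real (p - q) \<in> zol_class n \<sigma>"
    using p \<open>coeff p (n - 1) = - real n * \<sigma>\<close>
    by (auto simp: zol_class_def of_real_hom.degree_map_poly_hom)
  hence "sup_norm_I (map_poly of_real p) \<le> sup_norm_I (map_poly of_real (p - q))"
    using zol by (auto simp: is_zolotarev_def)
  moreover have "sup_norm_I (map_poly of_real (p - q)) < sup_norm_I (map_poly of_real p)"
    using less by (intro sup_norm_I_less) (simp add: of_real_poly_hom.hom_minus flip: of_real_diff)
  ultimately show False by simp
qed

lemma zolotarev_real_model: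
  fixes Z :: "complex poly"
  assumes n: "2 \<le> n" and zol: "is_zolotarev n \<sigma> Z" and L: "L = sup_norm_I Z"
    and \<alpha>: "1 < \<alpha>" and \<beta>: "\<alpha> < \<beta>"
    and level: "{x. poly Z x \<in> of_real ` {-L..L}} = of_real ` ({-1..1} \<union> {\<alpha>..\<beta>})"
  obtains p ups downs where "Z = map_poly of_real p" "zolotarev_real p n L \<alpha> \<beta> ups downs"
proof -
  have Z: "degree Z = n" "coeff Z n = 1"
    using zol by (auto simp: is_zolotarev_def zol_class_def)
  have in_level: "poly Z z \<in> of_real ` {-L..L} \<longleftrightarrow> z \<in> of_real ` ({-1..1} \<union> {\<alpha>..\<beta>})" for z
    using level by blast
  define p where "p = map_poly Re Z"
  have "Z = map_poly of_real p"
    unfolding p_def using in_level by (intro real_poly_if_real_on_interval) force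
  hence poly_Z: "poly Z (of_real x) = of_real (poly p x)" for x by simp
  have p: "degree p = n" "lead_coeff p = 1"
    using Z \<open>Z = map_poly of_real p\<close> by (auto simp: of_real_hom.degree_map_poly_hom)
  have level_p: "\<bar>poly p x\<bar> \<le> L \<longleftrightarrow> x \<in> {-1..1} \<union> {\<alpha>..\<beta>}" for x
    using in_level[of "of_real x"] by (auto simp: poly_Z image_iff abs_le_iff)
  have "0 < L"
  proof (rule ccontr)
    assume "\<not> 0 < L"
    hence "p = 0" using level_p by (intro poly_eq_0_if_vanishes_on_interval) force
    thus False using p n by simp
  qed
  have deg_const: "degree (p + [:c:]) = n" "lead_coeff (p + [:c:]) = 1" for c
    using p n by (simp_all add: degree_add_eq_left coeff_pCons split: nat.split)
  have real_roots: "z \<in> \<real>" if "poly (map_poly of_real (p + [:c:])) z = 0" "\<bar>c\<bar> = L"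
    for z :: complex and c
  proof -
    have "poly Z z = of_real (- c)"
      using that(1) \<open>Z = map_poly of_real p\<close> by (simp add: hom_distribs eq_neg_iff_add_eq_0)
    hence "poly Z z \<in> of_real ` {-L..L}" using that(2) by (auto intro!: image_eqI[of _ _ "- c"])
    hence "z \<in> of_real ` ({-1..1} \<union> {\<alpha>..\<beta>})" using in_level by blast
    thus ?thesis by auto
  qed
  have "\<bar>- L\<bar> = L" "\<bar>L\<bar> = L" using \<open>0 < L\<close> by simp_all
  then obtain ups downs where "p + [:- L:] = poly_of_roots ups" "p + [:L:] = poly_of_roots downs"
    using poly_of_roots_if_roots_real[OF deg_const(2) real_roots] by meson
  moreover have "p - [:L:] = p + [:- L:]" by simp
  moreover have "\<not> (\<forall>x\<in>{-1..1}. \<bar>poly p x - poly q x\<bar> < L)" if "degree q \<le> n - 2" for q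
    using zolotarev_not_improvable[OF n zol[unfolded \<open>Z = map_poly of_real p\<close>] that] L
      \<open>Z = map_poly of_real p\<close> by simp
  ultimately have "zolotarev_real p n L \<alpha> \<beta> ups downs"
    using n p \<open>0 < L\<close> \<alpha> \<beta> level_p by unfold_locales auto
  with \<open>Z = map_poly of_real p\<close> show ?thesis by (rule that)
qed

lemma zolotarev_factorisation:
  fixes Z :: "complex poly"
  assumes "2 \<le> n" "is_zolotarev n \<sigma> Z" "L = sup_norm_I Z" "1 < \<alpha>" "\<alpha> < \<beta>"
    and "{x. poly Z x \<in> of_real ` {-L..L}} = of_real ` ({-1..1} \<union> {\<alpha>..\<beta>})"
  obtains P Q e where "e \<le> 1" "lead_coeff P = 1" "lead_coeff Q = 1"
    "Z - [:of_real L:] = poly_of_roots (map of_real (\<beta> # replicate e (-1))) * P ^ 2"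
    "Z + [:of_real L:] = poly_of_roots (map of_real (\<alpha> # 1 # replicate (1 - e) (-1))) * Q ^ 2"
    "n = 1 + e + 2 * degree P" "n = 3 - e + 2 * degree Q"
proof -
  obtain p ups downs where Z: "Z = map_poly of_real p" and model: "zolotarev_real p n L \<alpha> \<beta> ups downs"
    using zolotarev_real_model[OF assms] by blast
  interpret zolotarev_real p n L \<alpha> \<beta> ups downs by (rule model)
  obtain P Q e where e: "e \<le> 1" and PQ: "lead_coeff P = 1" "lead_coeff Q = 1"
    and P: "p - [:L:] = poly_of_roots (\<beta> # replicate e (-1)) * P ^ 2"
    and Q: "p + [:L:] = poly_of_roots (\<alpha> # 1 # replicate (1 - e) (-1)) * Q ^ 2"
    by (rule factorisation)
  have "n = 1 + e + 2 * degree P" "n = 3 - e + 2 * degree Q"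
    using arg_cong[OF P, of degree] arg_cong[OF Q, of degree] degree_add_const[of "- L"]
      degree_add_const[of L] e PQ
    by (simp_all add: degree_poly_of_roots_mult_square diff_conv_add_uminus del: poly_of_roots_Cons)
  moreover have "Z - [:of_real L:] = map_poly of_real (p - [:L:])"
    "Z + [:of_real L:] = map_poly of_real (p + [:L:])" by (simp_all add: Z hom_distribs)
  ultimately show ?thesis
    using e PQ
    unfolding P Q of_real_poly_hom.hom_mult of_real_poly_hom.hom_power map_poly_of_real_poly_of_roots
    by (intro that[of e "map_poly of_real P" "map_poly of_real Q"])
      (simp_all add: of_real_hom.hom_lead_coeff)
qed

lemma corollary3_odd:
  fixes Z P Q :: "complex poly"
  assumes n: "n = 2 * m + 1" "2 \<le> n" "coeff Z (n - 1) = - of_real (real n * \<sigma>)"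
    and e: "e \<le> 1" and PQ: "lead_coeff P = 1" "lead_coeff Q = 1"
    and fP: "Z - [:of_real L:] = poly_of_roots (map of_real (\<beta> # replicate e (-1))) * P ^ 2"
    and fQ: "Z + [:of_real L:] = poly_of_roots (map of_real (\<alpha> # 1 # replicate (1 - e) (-1))) * Q ^ 2"
    and deg: "n = 1 + e + 2 * degree P" "n = 3 - e + 2 * degree Q"
  shows "let s1 = (\<lambda>k. complex_of_real ((- (\<alpha> ^ k) - 1 - (-1) ^ k - \<beta> ^ k) / 2));
             s2 = (\<lambda>k. complex_of_real ((\<alpha> ^ k + 1 + (-1) ^ k + \<beta> ^ k) / 2))
         in complex_of_real \<beta> ^ (m + 1) * detF s1 (m - 1) (m + 1)
              + (\<Sum>i = 1..m + 1. complex_of_real \<beta> ^ (m + 1 - i) * detFi s1 (m - 1) (m + 1) i) = 0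
          \<and> - 2 * detFi s2 (m + 1) (m - 1) 1
              + complex_of_real (\<alpha> - real n * \<sigma>) * detF s2 (m + 1) (m - 1) = 0"
proof -
  have "e = 0" using deg(1) e n(1) by presburger
  hence m: "1 \<le> m" and PQ_deg: "degree P = m" "degree Q = m - 1"
    and fP': "Z - [:of_real L:] = poly_of_roots [of_real \<beta>] * P ^ 2"
    and fQ': "Z + [:of_real L:] = poly_of_roots [of_real \<alpha>, 1, -1] * Q ^ 2"
    using deg n fP fQ by (auto simp del: poly_of_roots_Cons)
  define s1 s2 where
    "s1 = (\<lambda>k. complex_of_real ((- (\<alpha> ^ k) - 1 - (-1) ^ k - \<beta> ^ k) / 2))" and
    "s2 = (\<lambda>k. complex_of_real ((\<alpha> ^ k + 1 + (-1) ^ k + \<beta> ^ k) / 2))"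
  have "s1 k = (- (of_real \<alpha> ^ k) - 1 - (-1) ^ k - of_real \<beta> ^ k) / 2"
    "s2 k = (of_real \<alpha> ^ k + 1 + (-1) ^ k + of_real \<beta> ^ k) / 2" for k
    by (simp_all add: s1_def s2_def)
  from det_identities_odd[OF m fP' fQ' PQ_deg(1) PQ(1) PQ_deg(2) PQ(2) this] show ?thesis
    unfolding Let_def s1_def[symmetric] s2_def[symmetric] using n by simp
qed

lemma corollary3_even:
  fixes Z P Q :: "complex poly"
  assumes n: "n = 2 * m + 2" "coeff Z (n - 1) = - of_real (real n * \<sigma>)"
    and e: "e \<le> 1" and PQ: "lead_coeff P = 1" "lead_coeff Q = 1"
    and fP: "Z - [:of_real L:] = poly_of_roots (map of_real (\<beta> # replicate e (-1))) * P ^ 2"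
    and fQ: "Z + [:of_real L:] = poly_of_roots (map of_real (\<alpha> # 1 # replicate (1 - e) (-1))) * Q ^ 2"
    and deg: "n = 1 + e + 2 * degree P" "n = 3 - e + 2 * degree Q"
  shows "let s1 = (\<lambda>k. complex_of_real ((- (\<alpha> ^ k) + 1 - (-1) ^ k - \<beta> ^ k) / 2));
             s2 = (\<lambda>k. complex_of_real ((\<alpha> ^ k + 1 + (-1) ^ k - \<beta> ^ k) / 2))
         in complex_of_real \<alpha> ^ (m + 1) * detF s1 m (m + 1)
              + (\<Sum>i = 1..m + 1. complex_of_real \<alpha> ^ (m + 1 - i) * detFi s1 m (m + 1) i) = 0
          \<and> - 2 * detFi s2 (m + 1) m 1
              + complex_of_real (\<alpha> + 1 - real n * \<sigma>) * detF s2 (m + 1) m = 0"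
proof -
  have "e = 1" using deg(1) e n(1) by presburger
  hence PQ_deg: "degree P = m" "degree Q = m"
    and fP': "Z - [:of_real L:] = poly_of_roots [of_real \<beta>, -1] * P ^ 2"
    and fQ': "Z + [:of_real L:] = poly_of_roots [of_real \<alpha>, 1] * Q ^ 2"
    using deg n fP fQ by (auto simp del: poly_of_roots_Cons)
  define s1 s2 where
    "s1 = (\<lambda>k. complex_of_real ((- (\<alpha> ^ k) + 1 - (-1) ^ k - \<beta> ^ k) / 2))" and
    "s2 = (\<lambda>k. complex_of_real ((\<alpha> ^ k + 1 + (-1) ^ k - \<beta> ^ k) / 2))"
  have "s1 k = (- (of_real \<alpha> ^ k) + 1 - (-1) ^ k - of_real \<beta> ^ k) / 2"
    "s2 k = (of_real \<alpha> ^ k + 1 + (-1) ^ k - of_real \<beta> ^ k) / 2" for k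
    by (simp_all add: s1_def s2_def)
  from det_identities_even[OF fP' fQ' PQ_deg(1) PQ(1) PQ_deg(2) PQ(2) this] show ?thesis
    unfolding Let_def s1_def[symmetric] s2_def[symmetric] using n by simp
qed

theorem corollary3:
  fixes n :: nat and \<sigma> \<alpha> \<beta> L :: real and Z :: "complex poly"
  assumes "n \<ge> 2"
    and "\<sigma> > (tan (pi / (2 * real n)))\<^sup>2"
    and "is_zolotarev n \<sigma> Z"
    and "L = sup_norm_I Z"
    and "1 < \<alpha>" and "\<alpha> < \<beta>"
    and "{x::complex. poly Z x \<in> complex_of_real ` {-L..L}} =
         complex_of_real ` ({-1..1} \<union> {\<alpha>..\<beta>})"
  shows "(\<forall>m. n = 2 * m + 1 \<longrightarrow>
            (let s1 = (\<lambda>k. complex_of_real ((- (\<alpha> ^ k) - 1 - (-1) ^ k - \<beta> ^ k) / 2));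
                 s2 = (\<lambda>k. complex_of_real ((\<alpha> ^ k + 1 + (-1) ^ k + \<beta> ^ k) / 2))
             in complex_of_real \<beta> ^ (m + 1) * detF s1 (m - 1) (m + 1)
                  + (\<Sum>i = 1..m + 1. complex_of_real \<beta> ^ (m + 1 - i) * detFi s1 (m - 1) (m + 1) i) = 0
              \<and> - 2 * detFi s2 (m + 1) (m - 1) 1
                  + complex_of_real (\<alpha> - real n * \<sigma>) * detF s2 (m + 1) (m - 1) = 0))
       \<and> (\<forall>m. n = 2 * m + 2 \<longrightarrow>
            (let s1 = (\<lambda>k. complex_of_real ((- (\<alpha> ^ k) + 1 - (-1) ^ k - \<beta> ^ k) / 2));
                 s2 = (\<lambda>k. complex_of_real ((\<alpha> ^ k + 1 + (-1) ^ k - \<beta> ^ k) / 2))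
             in complex_of_real \<alpha> ^ (m + 1) * detF s1 m (m + 1)
                  + (\<Sum>i = 1..m + 1. complex_of_real \<alpha> ^ (m + 1 - i) * detFi s1 m (m + 1) i) = 0
              \<and> - 2 * detFi s2 (m + 1) m 1
                  + complex_of_real (\<alpha> + 1 - real n * \<sigma>) * detF s2 (m + 1) m = 0))"
proof -
  \<comment> \<open>The bound on \<open>\<sigma>\<close> only guarantees the shape of the level set, which is assumed anyway.\<close>
  obtain P Q e where "e \<le> 1" "lead_coeff P = 1" "lead_coeff Q = 1"
    "Z - [:of_real L:] = poly_of_roots (map of_real (\<beta> # replicate e (-1))) * P ^ 2"
    "Z + [:of_real L:] = poly_of_roots (map of_real (\<alpha> # 1 # replicate (1 - e) (-1))) * Q ^ 2"
    "n = 1 + e + 2 * degree P" "n = 3 - e + 2 * degree Q"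
    by (rule zolotarev_factorisation[OF assms(1,3-7)])
  moreover have "coeff Z (n - 1) = - of_real (real n * \<sigma>)"
    using assms(3) by (simp add: is_zolotarev_def zol_class_def)
  ultimately show ?thesis
    using corollary3_odd[OF _ assms(1)] corollary3_even by blast
qed

end
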